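(* For $f|N$ with $(f,N/f)\mid\frac{N}{N^*}$, $q_1 | \frac{N}{f}$, $q_2 | f$, and $\chi_i$ primitive modulo $q_i$ satisfying $\chi_1 \overline{\chi_2} \sim \psi$, let \begin{equation*} D_{\chi_1, \chi_2,f}(z,s, \psi) = \sum^{*}_{u \bmod{(f, N/f)}} \chi_1(-u) E_{\frac{1}{uf}}(z,s, \psi), \end{equation*} where the sum is over representatives $u$ of $(\mathbb Z/(f,N/f)\mathbb Z)^*$ chosen coprime to $N$. Then, with $s=1/2+it$, the functions $D_{\chi_1, \chi_2, f}(z,s,\psi)$ form an orthogonal basis for $\mathcal{E}_{t,\psi}(N)$.
   Context: Let $N\ge1$, $k\in\mathbb Z$, $\psi$ a Dirichlet character modulo $N$ with $\psi(-1)=(-1)^k$, induced by a primitive character of conductor $N^*$. For $\gamma=\begin{pmatrix}a&b\\c&d\end{pmatrix}$ put $j(\gamma,z)=\frac{cz+d}{|cz+d|}$ and $\psi(\gamma)=\psi(d)$. For a cusp $\mathfrak a$ of $\Gamma=\Gamma_0(N)$ with scaling matrix $\sigma_{\mathfrak a}$ which is singular for $\psi$ (i.e. $\psi(\sigma_{\mathfrak a}\begin{pmatrix}1&1\\0&1\end{pmatrix}\sigma_{\mathfrak a}^{-1})=1$), $E_{\mathfrak a}(z,s,\psi)=\sum_{\gamma\in\Gamma_{\mathfrak a}\backslash\Gamma}\overline{\psi}(\gamma)j(\sigma_{\mathfrak a}^{-1}\gamma,z)^{-k}(\mathrm{Im}\,\sigma_{\mathfrak a}^{-1}\gamma z)^s$.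 The cusp $\frac{1}{uf}$ ($f|N$, $(u,N)=1$) is singular for $\psi$ iff $(f,N/f)\mid N/N^*$. $\chi_1\overline{\chi_2}\sim\psi$ means both are induced by the same primitive character; the principal character modulo 1 counts as primitive. $\mathcal{E}_{t,\psi}(N)=\mathrm{span}\{E_{\mathfrak a}(z,1/2+it,\psi):\mathfrak a \text{ singular for }\psi\}$, equipped with the formal inner product defined by $\frac{1}{4\pi}\langle E_{\mathfrak a}(\cdot,1/2+it,\psi),E_{\mathfrak b}(\cdot,1/2+it,\psi)\rangle_{\mathrm{Eis}}=\delta_{\mathfrak a\mathfrak b}$ (for inequivalent singular cusps), extended bilinearly; this is well defined at least for $t\neq0$, where the $E_{\mathfrak a}$ are linearly independent. *)

theory Defs
  imports "HOL-Number_Theory.Number_Theory" "HOL-Analysis.Analysis"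
begin

definition dchar :: "nat \<Rightarrow> (int \<Rightarrow> complex) \<Rightarrow> bool" where
  "dchar q chi \<longleftrightarrow> q \<ge> 1 \<and>
     (\<forall>m n. chi (m * n) = chi m * chi n) \<and>
     (\<forall>n. chi (n + int q) = chi n) \<and>
     (\<forall>n. chi n = 0 \<longleftrightarrow> \<not> coprime n (int q))"

definition primitive_char :: "nat \<Rightarrow> (int \<Rightarrow> complex) \<Rightarrow> bool" where
  "primitive_char q chi \<longleftrightarrow> dchar q chi \<and>
     (\<forall>d::nat. d dvd q \<and> d < q \<longrightarrow>
        \<not> (\<forall>n. coprime n (int q) \<and> [n = 1] (mod int d) \<longrightarrow> chi n = 1))"

definition induced_by :: "nat \<Rightarrow> (int \<Rightarrow> complex) \<Rightarrow> nat \<Rightarrow> (int \<Rightarrow> complex) \<Rightarrow> bool" where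
  "induced_by M chi c chis \<longleftrightarrow> primitive_char c chis \<and> c dvd M \<and>
     (\<forall>n. chi n = (if coprime n (int M) then chis n else 0))"

text \<open>chi1 * conj chi2 ~ psi: both are induced by the same primitive character.
  (chi1 * conj chi2 is a character modulo lcm q1 q2.)\<close>
definition char_sim :: "nat \<Rightarrow> nat \<Rightarrow> (int \<Rightarrow> complex) \<Rightarrow> (int \<Rightarrow> complex)
    \<Rightarrow> nat \<Rightarrow> (int \<Rightarrow> complex) \<Rightarrow> bool" where
  "char_sim q1 q2 chi1 chi2 N psi \<longleftrightarrow> (\<exists>c chis.
     induced_by (lcm q1 q2) (\<lambda>n. chi1 n * cnj (chi2 n)) c chis \<and> induced_by N psi c chis)"

text \<open>The cusp 1/(u f) of Gamma_0(N), f | N, u a unit mod (f, N/f), is encoded as (f, r) with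
  r the residue of u mod (f, N/f), 0 \<le> r < (f, N/f). These form a complete set of
  inequivalent cusps; the singular ones are those with (f, N/f) | N/N*.\<close>
definition sing_cusps :: "nat \<Rightarrow> nat \<Rightarrow> (nat \<times> nat) set" where
  "sing_cusps N Nstar = {(f, r). f dvd N \<and> gcd f (N div f) dvd N div Nstar \<and>
      r < gcd f (N div f) \<and> coprime r (gcd f (N div f))}"

definition upper_half :: "complex set" where
  "upper_half = {z. Im z > 0}"

definition eis_span :: "(nat \<times> nat) set \<Rightarrow> (nat \<times> nat \<Rightarrow> complex \<Rightarrow> complex)
    \<Rightarrow> (complex \<Rightarrow> complex) set" where
  "eis_span C E = {F. \<exists>a. \<forall>z\<in>upper_half. F z = (\<Sum>c\<in>C. a c * E c z)}"

definition lin_indep_family :: "(nat \<times> nat) set \<Rightarrow> (nat \<times> nat \<Rightarrow> complex \<Rightarrow> complex) \<Rightarrow> bool" where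
  "lin_indep_family C E \<longleftrightarrow> (\<forall>a. (\<forall>z\<in>upper_half. (\<Sum>c\<in>C. a c * E c z) = 0) \<longrightarrow> (\<forall>c\<in>C. a c = 0))"

definition eis_coeffs :: "(nat \<times> nat) set \<Rightarrow> (nat \<times> nat \<Rightarrow> complex \<Rightarrow> complex)
    \<Rightarrow> (complex \<Rightarrow> complex) \<Rightarrow> nat \<times> nat \<Rightarrow> complex" where
  "eis_coeffs C E F = (SOME a. \<forall>z\<in>upper_half. F z = (\<Sum>c\<in>C. a c * E c z))"

text \<open>Formal inner product: <E_a, E_b>_Eis = 4 pi delta_ab, extended sesquilinearly.\<close>
definition formal_inner :: "(nat \<times> nat) set \<Rightarrow> (nat \<times> nat \<Rightarrow> complex \<Rightarrow> complex)
    \<Rightarrow> (complex \<Rightarrow> complex) \<Rightarrow> (complex \<Rightarrow> complex) \<Rightarrow> complex" where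
  "formal_inner C E F G = 4 * of_real pi *
     (\<Sum>c\<in>C. eis_coeffs C E F c * cnj (eis_coeffs C E G c))"

definition D_series :: "nat \<Rightarrow> nat \<Rightarrow> (nat \<Rightarrow> nat \<Rightarrow> int) \<Rightarrow> (nat \<times> nat \<Rightarrow> complex \<Rightarrow> complex)
    \<Rightarrow> nat \<Rightarrow> (int \<Rightarrow> complex) \<Rightarrow> complex \<Rightarrow> complex" where
  "D_series N Nstar rep E f chi1 =
     (\<lambda>z. \<Sum>r\<in>{r. (f, r) \<in> sing_cusps N Nstar}. chi1 (- rep f r) * E (f, r) z)"

definition D_index :: "nat \<Rightarrow> nat \<Rightarrow> (int \<Rightarrow> complex)
    \<Rightarrow> (nat \<times> (int \<Rightarrow> complex) \<times> (int \<Rightarrow> complex)) set" where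
  "D_index N Nstar psi = {(f, chi1, chi2). f dvd N \<and> gcd f (N div f) dvd N div Nstar \<and>
     (\<exists>q1 q2. q1 dvd N div f \<and> q2 dvd f \<and> primitive_char q1 chi1 \<and> primitive_char q2 chi2 \<and>
        char_sim q1 q2 chi1 chi2 N psi)}"

end

theory Submission
  imports Defs
begin

(*
  For fixed f the functions D_{chi1,chi2,f} only involve the cusps 1/(uf), and their coefficient
  vectors are (chi1(-u))_u with u running over the units modulo g = (f, N/f). Hence D's with different
  f are orthogonal, and for fixed f everything reduces to characters of (Z/gZ)^*.
  Fix a character chi_A modulo N that is trivial on n = 1 (mod N/f) and agrees with psi on
  n = 1 (mod f); it exists since psi is trivial on n = 1 (mod lcm(f, N/f)) by singularity.
  The first characters chi1 occurring for this f are, up to induction, exactly the twists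
  chi_A * theta by characters theta modulo g, and chi1 determines chi2. Two distinct ones differ by a
  nontrivial character of (Z/gZ)^*, so their coefficient vectors are orthogonal; conversely, dividing
  any coefficient vector by chi_A(-u) and expanding in characters modulo g writes it as a combination
  of the D's. The character theory behind this (characters separating units, orthogonality,
  expansion) rests on extending characters from subgroups of (Z/MZ)^* one generator at a time.
*)

lemma dchar_mult: "dchar q chi \<Longrightarrow> chi (m * n) = chi m * chi n"
  by (simp add: dchar_def)

lemma dchar_eq_0_iff: "dchar q chi \<Longrightarrow> chi n = 0 \<longleftrightarrow> \<not> coprime n (int q)"
  by (simp add: dchar_def)

lemma dchar_modulus_pos: "dchar q chi \<Longrightarrow> q \<ge> 1"
  by (simp add: dchar_def)

lemma dchar_one: assumes "dchar q chi" shows "chi 1 = 1"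
proof -
  have "chi 1 \<noteq> 0" using assms by (simp add: dchar_def)
  moreover have "chi 1 * (chi 1 - 1) = 0"
    using dchar_mult[OF assms, of 1 1] by (simp add: algebra_simps)
  ultimately show ?thesis by simp
qed

lemma dchar_periodic: assumes "dchar q chi" shows "chi (n + int q * k) = chi n"
proof (induction k rule: int_induct[where k = 0])
  case (step1 i)
  have "chi (n + int q * (i + 1)) = chi ((n + int q * i) + int q)" by (simp add: algebra_simps)
  then show ?case using assms step1 by (simp add: dchar_def)
next
  case (step2 i)
  have "chi (n + int q * i) = chi ((n + int q * (i - 1)) + int q)" by (simp add: algebra_simps)
  then show ?case using assms step2 by (simp add: dchar_def)
qed simp

lemma dchar_cong: assumes "dchar q chi" "[m = n] (mod int q)" shows "chi m = chi n"
proof -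
  obtain k where "n = m + int q * k" using assms(2) cong_iff_lin by blast
  then show ?thesis using dchar_periodic[OF assms(1)] by simp
qed

lemma dchar_pow: "dchar q chi \<Longrightarrow> chi (n ^ k) = chi n ^ k"
  by (induction k) (simp_all add: dchar_one dchar_mult)

lemma euler_theorem_int: assumes "coprime n (int q)" shows "[n ^ totient q = 1] (mod int q)"
proof (cases "q = 0")
  case False
  define a where "a = nat (n mod int q)"
  have a: "int a = n mod int q" using False a_def by simp
  have "coprime (n mod int q) (int q)" using assms False by simp
  then have "coprime a q" using a by (metis coprime_int_iff)
  then have "[int a ^ totient q = 1] (mod int q)"
    using euler_theorem by (metis cong_int_iff of_nat_1 of_nat_power)
  moreover have "[n = int a] (mod int q)" using a by (simp add: cong_def)
  ultimately show ?thesis by (meson cong_pow cong_trans)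
qed simp

lemma dchar_pow_totient: assumes "dchar q chi" "coprime n (int q)" shows "chi n ^ totient q = 1"
  using dchar_pow[OF assms(1), symmetric] dchar_cong[OF assms(1) euler_theorem_int[OF assms(2)]]
    dchar_one[OF assms(1)] by simp

lemma norm_dchar: assumes "dchar q chi" "coprime n (int q)" shows "norm (chi n) = 1"
proof -
  have "norm (chi n) ^ totient q = 1" using dchar_pow_totient[OF assms] by (metis norm_one norm_power)
  moreover have "totient q > 0" using dchar_modulus_pos[OF assms(1)] by simp
  ultimately show ?thesis using power_eq_imp_eq_base[of "norm (chi n)" "totient q" 1] by simp
qed

lemma dchar_mult_cnj: assumes "dchar q chi" "coprime n (int q)" shows "chi n * cnj (chi n) = 1"
  using complex_norm_square[of "chi n"] norm_dchar[OF assms] by simp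

lemma dchar_cnj_eq_modular_inverse:
  assumes "dchar q chi" "coprime a (int q)"
  shows "cnj (chi a) = chi (modular_inverse (int q) a)"
proof -
  have "chi a * chi (modular_inverse (int q) a) = 1"
    using dchar_cong[OF assms(1) cong_modular_inverse1[OF assms(2)]] dchar_mult[OF assms(1)]
      dchar_one[OF assms(1)] by simp
  then have "cnj (chi a) = cnj (chi a) * (chi a * chi (modular_inverse (int q) a))" by simp
  also have "\<dots> = chi (modular_inverse (int q) a)"
    using dchar_mult_cnj[OF assms] by (simp add: ac_simps)
  finally show ?thesis .
qed

lemma dchar_mult_fun: assumes "dchar q a" "dchar q b" shows "dchar q (\<lambda>n. a n * b n)"
  using assms unfolding dchar_def by (auto simp: ac_simps)

lemma dchar_cnj_fun: assumes "dchar q a" shows "dchar q (\<lambda>n. cnj (a n))"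
  using assms unfolding dchar_def by auto

lemma coprime_lcm_right_iff:
  "coprime (n::int) (int (lcm a b)) \<longleftrightarrow> coprime n (int a) \<and> coprime n (int b)"
proof
  assume "coprime n (int (lcm a b))"
  then show "coprime n (int a) \<and> coprime n (int b)"
    using coprime_divisors[of n n] by (metis dvd_lcm1 dvd_lcm2 dvd_refl int_dvd_int_iff)
next
  assume "coprime n (int a) \<and> coprime n (int b)"
  then have "coprime n (int a * int b)" by simp
  moreover have "int (lcm a b) dvd int a * int b" by (metis lcm_least dvd_triv_left dvd_triv_right int_dvd_int_iff of_nat_mult)
  ultimately show "coprime n (int (lcm a b))" using coprime_divisors[OF dvd_refl] by blast
qed

lemma exists_coprime_cong:
  fixes n q N :: int assumes N: "N \<noteq> 0" and nq: "coprime n q"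
  shows "\<exists>k. [k = n] (mod q) \<and> coprime k N"
proof -
  define P where "P = {p \<in> prime_factors N. \<not> p dvd n}"
  have finP: "finite P" unfolding P_def by simp
  have dvd_prod_iff: "p dvd \<Prod>P \<longleftrightarrow> p \<in> P" if p: "prime p" for p
  proof
    assume "p dvd \<Prod>P"
    then obtain x where "x \<in> P" "p dvd x" using prime_dvd_prod_iff[OF finP p, of id] by auto
    moreover from this have "prime x" unfolding P_def by auto
    ultimately show "p \<in> P" using primes_dvd_imp_eq[OF p] by blast
  qed (use dvd_prodI[OF finP] in simp)
  define k where "k = n + q * \<Prod>P"
  have "[k = n] (mod q)" unfolding k_def cong_iff_lin by (intro exI[of _ "- \<Prod>P"]) simp
  moreover have no_prime_dvd: "\<not> p dvd k" if p: "prime p" "p dvd N" for p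
  proof (cases "p dvd n")
    case True
    then have "\<not> p dvd q" using nq p(1) not_prime_unit coprime_common_divisor by blast
    moreover have "\<not> p dvd \<Prod>P" using True dvd_prod_iff[OF p(1)] unfolding P_def by simp
    ultimately have "\<not> p dvd q * \<Prod>P" using p(1) prime_dvd_mult_iff by blast
    then show ?thesis using True unfolding k_def by (simp add: dvd_add_right_iff)
  next
    case False
    then have "p dvd \<Prod>P" using dvd_prod_iff[OF p(1)] p N unfolding P_def by (simp add: in_prime_factors_iff)
    then show ?thesis using False unfolding k_def by (simp add: dvd_add_left_iff)
  qed
  moreover have "coprime k N"
  proof (rule coprimeI)
    fix c assume c: "c dvd k" "c dvd N"
    show "is_unit c"
    proof (rule ccontr)
      assume "\<not> is_unit c"
      moreover have "c \<noteq> 0" using c(2) N by auto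
      ultimately obtain p where "prime p" "p dvd c" using prime_divisor_exists by blast
      then show False using no_prime_dvd c dvd_trans by blast
    qed
  qed
  ultimately show ?thesis by blast
qed

lemma cong_solvable_mod_gcd:
  fixes a b n m :: int assumes "[n = m] (mod gcd a b)"
  shows "\<exists>k. [k = n] (mod a) \<and> [k = m] (mod b)"
proof -
  obtain u v where uv: "u * a + v * b = gcd a b" using bezout_int by blast
  obtain s where s: "m = n + gcd a b * s" using assms cong_iff_lin by blast
  define k where "k = n + u * a * s"
  have "[k = n] (mod a)" unfolding k_def cong_iff_lin by (rule exI[of _ "- u * s"]) (simp add: algebra_simps)
  moreover have "[k = m] (mod b)" unfolding cong_iff_lin
    by (rule exI[of _ "v * s"]) (simp add: k_def s uv[symmetric] algebra_simps)
  ultimately show ?thesis by blast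
qed

lemma primitive_char_dchar: "primitive_char q chi \<Longrightarrow> dchar q chi"
  by (simp add: primitive_char_def)

lemma dchar_eq_if_eq_on_units:
  assumes "dchar q chi" "dchar q chi'" "N \<noteq> 0"
    and "\<forall>n. coprime n (int N) \<longrightarrow> chi n = chi' n"
  shows "chi = chi'"
proof
  fix n
  show "chi n = chi' n"
  proof (cases "coprime n (int q)")
    case True
    then obtain k where k: "[k = n] (mod int q)" "coprime k (int N)"
      using exists_coprime_cong[of "int N" n] assms(3) by auto
    then show ?thesis using assms dchar_cong[OF assms(1) k(1)] dchar_cong[OF assms(2) k(1)] by simp
  qed (use assms dchar_eq_0_iff in metis)
qed

lemma primitive_char_conductor_dvd:
  assumes p: "primitive_char q chi" and d': "dchar q' chi'" and N: "N \<noteq> 0"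
    and eq: "\<forall>n. coprime n (int N) \<longrightarrow> chi n = chi' n"
  shows "q dvd q'"
proof (rule ccontr)
  assume "\<not> q dvd q'"
  moreover have "q \<ge> 1" using p by (simp add: primitive_char_def dchar_def)
  ultimately have "gcd q q' < q" by (metis dvd_imp_le gcd_dvd1 gcd_dvd2 le_neq_implies_less not_one_le_zero
      bot_nat_0.not_eq_extremum)
  then obtain n where n: "coprime n (int q)" "[n = 1] (mod int (gcd q q'))" "chi n \<noteq> 1"
    using p unfolding primitive_char_def by (meson gcd_dvd1)
  then obtain k where k: "[k = n] (mod int q)" "[k = 1] (mod int q')"
    using cong_solvable_mod_gcd[of n 1 "int q" "int q'"] by (auto simp: gcd_int_def)
  have "coprime k (int q * int q')"
    using k n(1) by (metis cong_imp_coprime cong_sym coprime_1_left coprime_mult_right_iff)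
  then obtain k' where k': "[k' = k] (mod int q * int q')" "coprime k' (int N)"
    using exists_coprime_cong[of "int N" k "int q * int q'"] N by auto
  have "chi n = chi k'"
    using dchar_cong[OF primitive_char_dchar[OF p]] k'(1) k(1) by (meson cong_modulus_mult cong_sym cong_trans)
  also have "\<dots> = chi' k'" using eq k'(2) by simp
  also have "\<dots> = 1"
    using dchar_cong[OF d'] dchar_one[OF d'] k'(1) k(2) by (metis cong_modulus_mult mult.commute)
  finally show False using n(3) by simp
qed

lemma primitive_char_unique:
  assumes p: "primitive_char q chi" and p': "primitive_char q' chi'" and N: "N \<noteq> 0"
    and eq: "\<forall>n. coprime n (int N) \<longrightarrow> chi n = chi' n"
  shows "chi = chi'"
proof -
  have d: "dchar q chi" "dchar q' chi'" using p p' by (auto simp: primitive_char_def)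
  have "q dvd q'" using primitive_char_conductor_dvd[OF p d(2) N eq] .
  moreover have "q' dvd q" using primitive_char_conductor_dvd[OF p' d(1) N] eq by simp
  ultimately show ?thesis using dchar_eq_if_eq_on_units d N eq dvd_antisym by blast
qed

lemma dchar_values: assumes "dchar q chi" shows "chi y \<in> {z. z ^ totient q = 1} \<union> {0}"
  using dchar_pow_totient[OF assms] dchar_eq_0_iff[OF assms] by blast

lemma finite_dchar: "finite {chi. dchar q chi}"
proof (cases "q \<ge> 1")
  case True
  define V where "V = {z::complex. z ^ totient q = 1} \<union> {0}"
  have "finite V" unfolding V_def using finite_roots_unity[of "totient q"] True by (simp add: Suc_le_eq)
  then have "finite (\<Pi>\<^sub>E i\<in>{0..<int q}. V)" by (intro finite_PiE) auto
  moreover have "(\<lambda>chi. restrict chi {0..<int q}) ` {chi. dchar q chi} \<subseteq> (\<Pi>\<^sub>E i\<in>{0..<int q}. V)"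
    using dchar_values unfolding V_def by (force simp: restrict_PiE_iff)
  moreover have "inj_on (\<lambda>chi. restrict chi {0..<int q}) {chi. dchar q chi}"
  proof (rule inj_onI, rule ext)
    fix a b y assume ab: "a \<in> {chi. dchar q chi}" "b \<in> {chi. dchar q chi}"
      and e: "restrict a {0..<int q} = restrict b {0..<int q}"
    have "y mod int q \<in> {0..<int q}" using True by simp
    then have "a (y mod int q) = b (y mod int q)" using e by (metis restrict_apply')
    moreover have "[y = y mod int q] (mod int q)" by (simp add: cong_def)
    ultimately show "a y = b y" using ab dchar_cong by (metis mem_Collect_eq)
  qed
  ultimately show ?thesis using finite_imageD finite_subset by blast
qed (auto simp: dchar_def)

lemma dchar_lcm_mult_cnj:
  assumes a: "dchar q1 a" and b: "dchar q2 b"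
  shows "dchar (lcm q1 q2) (\<lambda>n. a n * cnj (b n))"
  unfolding dchar_def
proof (intro conjI allI)
  show "lcm q1 q2 \<ge> 1" using a b by (simp add: dchar_def Suc_le_eq lcm_pos_nat)
next
  fix n
  have "[n + int (lcm q1 q2) = n] (mod int q1)" "[n + int (lcm q1 q2) = n] (mod int q2)"
    by (simp_all add: cong_iff_dvd_diff)
  then show "a (n + int (lcm q1 q2)) * cnj (b (n + int (lcm q1 q2))) = a n * cnj (b n)"
    using dchar_cong[OF a] dchar_cong[OF b] by simp
qed (use dchar_mult[OF a] dchar_mult[OF b] dchar_eq_0_iff[OF a] dchar_eq_0_iff[OF b]
      coprime_lcm_right_iff in auto)

lemma dchar_extend_modulus:
  assumes d: "dchar g th" and gN: "g dvd N" and N: "N \<ge> 1"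
  shows "dchar N (\<lambda>n. if coprime n (int N) then th n else 0)"
  unfolding dchar_def
proof (intro conjI allI)
  fix n
  have c: "[n + int N = n] (mod int N)" by (simp add: cong_iff_dvd_diff)
  then have "coprime (n + int N) (int N) \<longleftrightarrow> coprime n (int N)" by (rule coprime_cong_cong_left)
  moreover have "th (n + int N) = th n"
    using dchar_cong[OF d cong_dvd_modulus[OF c]] gN by simp
  ultimately show "(if coprime (n + int N) (int N) then th (n + int N) else 0) =
      (if coprime n (int N) then th n else 0)" by simp
next
  fix n
  have "coprime n (int N) \<Longrightarrow> coprime n (int g)" using gN coprime_divisors[OF dvd_refl] by (metis int_dvd_int_iff)
  then show "((if coprime n (int N) then th n else 0) = 0) \<longleftrightarrow> \<not> coprime n (int N)"
    using dchar_eq_0_iff[OF d, of n] by auto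
qed (use N dchar_mult[OF d] in auto)

section \<open>Characters of subgroups of the unit group\<close>

text \<open>A set H of integers closed under congruence modulo M stands for a subgroup of the
  unit group of \<int>/M\<int>; partial_char M H chi says that chi is a character of that subgroup.\<close>
definition partial_char :: "nat \<Rightarrow> int set \<Rightarrow> (int \<Rightarrow> complex) \<Rightarrow> bool" where
  "partial_char M H chi \<longleftrightarrow> M \<ge> 1 \<and> 1 \<in> H \<and> (\<forall>a\<in>H. coprime a (int M))
     \<and> (\<forall>a\<in>H. \<forall>b\<in>H. a * b \<in> H) \<and> (\<forall>a\<in>H. \<forall>b. [b = a] (mod int M) \<longrightarrow> b \<in> H)
     \<and> (\<forall>a\<in>H. \<forall>b\<in>H. chi (a * b) = chi a * chi b) \<and> (\<forall>a\<in>H. chi a \<noteq> 0)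
     \<and> (\<forall>a\<in>H. \<forall>b\<in>H. [a = b] (mod int M) \<longrightarrow> chi a = chi b)"

context
  fixes M H chi assumes pc: "partial_char M H chi"
begin

lemma partial_char_modulus_pos: "M \<ge> 1"
  using pc unfolding partial_char_def by blast

lemma partial_char_one_mem: "1 \<in> H"
  using pc unfolding partial_char_def by blast

lemma partial_char_coprime: "a \<in> H \<Longrightarrow> coprime a (int M)"
  using pc unfolding partial_char_def by blast

lemma partial_char_mult_mem: "a \<in> H \<Longrightarrow> b \<in> H \<Longrightarrow> a * b \<in> H"
  using pc unfolding partial_char_def by blast

lemma partial_char_cong_mem: "a \<in> H \<Longrightarrow> [b = a] (mod int M) \<Longrightarrow> b \<in> H"
  using pc unfolding partial_char_def by blast

lemma partial_char_mult: "a \<in> H \<Longrightarrow> b \<in> H \<Longrightarrow> chi (a * b) = chi a * chi b"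
  using pc unfolding partial_char_def by blast

lemma partial_char_nonzero: "a \<in> H \<Longrightarrow> chi a \<noteq> 0"
  using pc unfolding partial_char_def by blast

lemma partial_char_cong: "a \<in> H \<Longrightarrow> b \<in> H \<Longrightarrow> [a = b] (mod int M) \<Longrightarrow> chi a = chi b"
  using pc unfolding partial_char_def by blast

lemma partial_char_one: "chi 1 = 1"
  using partial_char_nonzero[OF partial_char_one_mem] partial_char_mult[OF partial_char_one_mem partial_char_one_mem]
  by simp

lemma partial_char_pow_mem: "a \<in> H \<Longrightarrow> a ^ j \<in> H"
  by (induction j) (simp_all add: partial_char_one_mem partial_char_mult_mem)

lemma partial_char_pow: "a \<in> H \<Longrightarrow> chi (a ^ j) = chi a ^ j"
  by (induction j) (simp_all add: partial_char_one partial_char_mult partial_char_pow_mem)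

lemma partial_char_pow_totient_mem: "coprime x (int M) \<Longrightarrow> x ^ totient M \<in> H"
  using partial_char_cong_mem[OF partial_char_one_mem] euler_theorem_int by blast

lemma partial_char_cancel_mem:
  assumes a: "a \<in> H" and ab: "a * b \<in> H" shows "b \<in> H"
proof -
  have "totient M > 0" using partial_char_modulus_pos by simp
  then have "a ^ (totient M - 1) * (a * b) = a ^ totient M * b" by (metis mult.assoc power_minus_mult)
  moreover have "[a ^ totient M * b = b] (mod int M)"
    using cong_scalar_right[OF euler_theorem_int[OF partial_char_coprime[OF a]], of b] by simp
  ultimately have "[b = a ^ (totient M - 1) * (a * b)] (mod int M)" by (metis cong_sym)
  then show ?thesis using partial_char_cong_mem partial_char_mult_mem[OF partial_char_pow_mem[OF a] ab] by blast
qed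

end

lemma partial_char_least_pow_mem:
  assumes pc: "partial_char M H chi" and xc: "coprime x (int M)"
    and m: "m = (LEAST m. m > 0 \<and> x ^ m \<in> H)"
  shows "m > 0" "x ^ m \<in> H"
proof -
  have "totient M > 0" using partial_char_modulus_pos[OF pc] by simp
  then have "\<exists>m. m > 0 \<and> x ^ m \<in> H" using partial_char_pow_totient_mem[OF pc xc] by blast
  then have "m > 0 \<and> x ^ m \<in> H" unfolding m by (rule LeastI_ex)
  then show "m > 0" "x ^ m \<in> H" by auto
qed

lemma partial_char_pow_mem_iff:
  assumes pc: "partial_char M H chi" and xc: "coprime x (int M)"
    and m: "m = (LEAST m. m > 0 \<and> x ^ m \<in> H)"
  shows "x ^ j \<in> H \<longleftrightarrow> m dvd j"
proof
  assume xj: "x ^ j \<in> H"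
  note mp = partial_char_least_pow_mem[OF pc xc m]
  have "x ^ j = (x ^ m) ^ (j div m) * x ^ (j mod m)"
    by (metis div_mult_mod_eq power_add power_mult mult.commute)
  then have "x ^ (j mod m) \<in> H"
    using xj partial_char_cancel_mem[OF pc partial_char_pow_mem[OF pc mp(2)]] by metis
  moreover have "j mod m < m" using mp(1) by simp
  ultimately have "j mod m = 0" using not_less_Least[of "j mod m" "\<lambda>m. m > 0 \<and> x ^ m \<in> H"] m by auto
  then show "m dvd j" by auto
next
  assume "m dvd j"
  then show "x ^ j \<in> H"
    using partial_char_pow_mem[OF pc partial_char_least_pow_mem(2)[OF pc xc m]] by (auto simp: power_mult)
qed

lemma partial_char_adjoin_well_defined:
  assumes pc: "partial_char M H chi" and xc: "coprime x (int M)"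
    and m: "m = (LEAST m. m > 0 \<and> x ^ m \<in> H)" and w: "w ^ m = chi (x ^ m)"
    and h: "h \<in> H" "h' \<in> H" and c: "[h * x ^ j = h' * x ^ j'] (mod int M)"
  shows "chi h * w ^ j = chi h' * w ^ j'"
proof -
  have le_case: "chi h * w ^ j = chi h' * w ^ j'"
    if h: "h \<in> H" "h' \<in> H" and c: "[h * x ^ j = h' * x ^ j'] (mod int M)" and le: "j' \<le> j"
    for h h' j j'
  proof -
    define d where "d = j - j'"
    have jd: "j = d + j'" using le d_def by simp
    have "[h * x ^ d * x ^ j' = h' * x ^ j'] (mod int M)" using c unfolding jd by (simp add: power_add mult.assoc)
    then have c2: "[h * x ^ d = h'] (mod int M)" using xc cong_mult_rcancel coprime_power_left_iff by blast
    then have hd: "h * x ^ d \<in> H" using partial_char_cong_mem[OF pc h(2)] by blast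
    then have xd: "x ^ d \<in> H" using partial_char_cancel_mem[OF pc h(1)] by blast
    then obtain s where s: "d = m * s" using partial_char_pow_mem_iff[OF pc xc m] by blast
    have "chi h' = chi (h * x ^ d)" using partial_char_cong[OF pc h(2) hd cong_sym[OF c2]] by simp
    also have "\<dots> = chi h * chi (x ^ d)" using partial_char_mult[OF pc h(1) xd] .
    also have "chi (x ^ d) = w ^ d"
      using partial_char_pow[OF pc partial_char_least_pow_mem(2)[OF pc xc m]] s w by (simp add: power_mult)
    finally show ?thesis unfolding jd power_add by (simp add: mult.assoc)
  qed
  show ?thesis
  proof (cases "j' \<le> j")
    case False
    then show ?thesis using le_case[OF h(2) h(1) cong_sym[OF c]] by simp
  qed (rule le_case[OF h c])
qed

lemma partial_char_adjoin:
  assumes pc: "partial_char M H chi" and xc: "coprime x (int M)"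
    and m: "m = (LEAST m. m > 0 \<and> x ^ m \<in> H)" and w: "w ^ m = chi (x ^ m)"
  shows "\<exists>H' chi'. partial_char M H' chi' \<and> H \<subseteq> H' \<and> x \<in> H' \<and> (\<forall>a\<in>H. chi' a = chi a) \<and> chi' x = w"
proof -
  note mp = partial_char_least_pow_mem[OF pc xc m]
  note well_defined = partial_char_adjoin_well_defined[OF pc xc m w]
  have w0: "w \<noteq> 0" using w mp partial_char_nonzero[OF pc] by (metis power_0_left not_gr0)
  define Rep where "Rep y p \<longleftrightarrow> fst p \<in> H \<and> [y = fst p * x ^ snd p] (mod int M)" for y p
  define H' where "H' = {y. \<exists>p. Rep y p}"
  define chi' where "chi' y = chi (fst (SOME p. Rep y p)) * w ^ snd (SOME p. Rep y p)" for y
  have chi'_eq: "chi' y = chi h * w ^ j" if "h \<in> H" "[y = h * x ^ j] (mod int M)" for y h j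
  proof -
    have "Rep y (h, j)" using that unfolding Rep_def by simp
    then have "Rep y (SOME p. Rep y p)" by (rule someI)
    then show ?thesis unfolding chi'_def using that well_defined unfolding Rep_def by (meson cong_sym cong_trans)
  qed
  have H'_iff: "y \<in> H' \<longleftrightarrow> (\<exists>h\<in>H. \<exists>j. [y = h * x ^ j] (mod int M))" for y
    unfolding H'_def Rep_def by auto
  have one: "1 \<in> H" using partial_char_one_mem[OF pc] .
  have "partial_char M H' chi'"
    unfolding partial_char_def
  proof (intro conjI ballI allI impI)
    show "M \<ge> 1" using partial_char_modulus_pos[OF pc] .
    show "1 \<in> H'" unfolding H'_iff using one by (intro bexI[of _ 1] exI[of _ 0]) auto
  next
    fix a assume "a \<in> H'"
    then obtain h j where hj: "h \<in> H" "[a = h * x ^ j] (mod int M)" unfolding H'_iff by blast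
    have "coprime (h * x ^ j) (int M)" using partial_char_coprime[OF pc hj(1)] xc by simp
    then show "coprime a (int M)" using hj(2) by (meson cong_imp_coprime cong_sym)
    show "chi' a \<noteq> 0" using chi'_eq[OF hj] partial_char_nonzero[OF pc hj(1)] w0 by simp
  next
    fix a b assume "a \<in> H'" "b \<in> H'"
    then obtain h j h2 j2 where hj: "h \<in> H" "[a = h * x ^ j] (mod int M)" "h2 \<in> H" "[b = h2 * x ^ j2] (mod int M)"
      unfolding H'_iff by blast
    have c: "[a * b = (h * h2) * x ^ (j + j2)] (mod int M)"
      using cong_mult[OF hj(2) hj(4)] by (simp add: power_add ac_simps)
    have hh: "h * h2 \<in> H" using partial_char_mult_mem[OF pc hj(1) hj(3)] .
    show "a * b \<in> H'" unfolding H'_iff using c hh by blast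
    show "chi' (a * b) = chi' a * chi' b"
      using chi'_eq[OF hh c] chi'_eq[OF hj(1,2)] chi'_eq[OF hj(3,4)] partial_char_mult[OF pc hj(1) hj(3)]
      by (simp add: power_add)
    assume "[a = b] (mod int M)"
    then have "[b = h * x ^ j] (mod int M)" using hj(2) by (meson cong_sym cong_trans)
    then show "chi' a = chi' b" using chi'_eq[OF hj(1,2)] chi'_eq[OF hj(1)] by simp
  next
    fix a b assume "a \<in> H'" "[b = a] (mod int M)"
    then show "b \<in> H'" unfolding H'_iff using cong_trans by blast
  qed
  moreover have "H \<subseteq> H'"
  proof
    fix a assume "a \<in> H"
    then show "a \<in> H'" unfolding H'_iff by (intro bexI[of _ a] exI[of _ 0]) auto
  qed
  moreover have "x \<in> H'" unfolding H'_iff using one by (intro bexI[of _ 1] exI[of _ 1]) auto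
  moreover have "\<forall>a\<in>H. chi' a = chi a" using chi'_eq[of _ _ 0] by simp
  moreover have "chi' x = w" using chi'_eq[OF one, of x 1] partial_char_one[OF pc] by simp
  ultimately show ?thesis by blast
qed

lemma partial_char_total_imp_dchar:
  assumes pc: "partial_char M H chi" and total: "\<And>y. coprime y (int M) \<Longrightarrow> y \<in> H"
  shows "dchar M (\<lambda>y. if coprime y (int M) then chi y else 0)"
  unfolding dchar_def
proof (intro conjI allI)
  show "M \<ge> 1" using partial_char_modulus_pos[OF pc] .
next
  fix a b
  show "(if coprime (a * b) (int M) then chi (a * b) else 0) =
      (if coprime a (int M) then chi a else 0) * (if coprime b (int M) then chi b else 0)"
    using partial_char_mult[OF pc total total, of a b] by simp
next
  fix y
  have c: "[y + int M = y] (mod int M)" by (simp add: cong_iff_dvd_diff)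
  then have cc: "coprime (y + int M) (int M) \<longleftrightarrow> coprime y (int M)" by (rule coprime_cong_cong_left)
  show "(if coprime (y + int M) (int M) then chi (y + int M) else 0) = (if coprime y (int M) then chi y else 0)"
  proof (cases "coprime y (int M)")
    case True
    then show ?thesis using cc partial_char_cong[OF pc total total c] by simp
  qed (simp add: cc)
next
  fix y
  show "((if coprime y (int M) then chi y else 0) = 0) \<longleftrightarrow> \<not> coprime y (int M)"
    using partial_char_nonzero[OF pc total, of y] by simp
qed

lemma partial_char_extends_to_dchar:
  assumes pc: "partial_char M H chi"
  shows "\<exists>psi. dchar M psi \<and> (\<forall>a\<in>H. psi a = chi a)"
proof -
  have M: "M \<ge> 1" using partial_char_modulus_pos[OF pc] .
  define missing where "missing H = {r \<in> {0..<int M}. coprime r (int M) \<and> r \<notin> H}" for H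
  have fin: "finite (missing H)" for H unfolding missing_def by (rule finite_subset[of _ "{0..<int M}"]) auto
  show ?thesis using pc
  proof (induction "card (missing H)" arbitrary: H chi rule: less_induct)
    case less
    show ?case
    proof (cases "missing H = {}")
      case True
      have total: "y \<in> H" if "coprime y (int M)" for y
      proof -
        have "y mod int M \<in> {0..<int M}" "coprime (y mod int M) (int M)" using that M by simp_all
        then have "y mod int M \<in> H" using True unfolding missing_def by blast
        then show ?thesis using partial_char_cong_mem[OF less.prems] by (simp add: cong_def)
      qed
      show ?thesis
        using partial_char_total_imp_dchar[OF less.prems total] partial_char_coprime[OF less.prems] by force
    next
      case False
      then obtain r where r: "r \<in> missing H" by blast
      then have rc: "coprime r (int M)" unfolding missing_def by auto
      define m where "m = (LEAST m. m > 0 \<and> r ^ m \<in> H)"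
      have "m > 0" using partial_char_least_pow_mem[OF less.prems rc m_def] by simp
      then obtain w where w: "w ^ m = chi (r ^ m)" using exists_complex_root by (metis not_gr0)
      obtain H' chi' where H': "partial_char M H' chi'" "H \<subseteq> H'" "r \<in> H'" "\<forall>a\<in>H. chi' a = chi a"
        using partial_char_adjoin[OF less.prems rc m_def w] by blast
      have "missing H' \<subset> missing H" using H'(2,3) r unfolding missing_def by blast
      then have "card (missing H') < card (missing H)" using fin psubset_card_mono by blast
      then obtain psi where "dchar M psi" "\<forall>a\<in>H'. psi a = chi' a" using less.hyps[OF _ H'(1)] by blast
      then show ?thesis using H'(2,4) by (metis subsetD)
    qed
  qed
qed

lemma exists_dchar_ne_one:
  assumes M: "M \<ge> 1" and xc: "coprime x (int M)" and xn: "\<not> [x = 1] (mod int M)"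
  shows "\<exists>psi. dchar M psi \<and> psi x \<noteq> 1"
proof -
  define H where "H = {y. [y = 1] (mod int M)}"
  have pc: "partial_char M H (\<lambda>_. 1)"
    unfolding partial_char_def
  proof (intro conjI ballI allI impI)
    fix a assume "a \<in> H"
    then have "[1 = a] (mod int M)" unfolding H_def by (metis cong_sym mem_Collect_eq)
    then show "coprime a (int M)" using cong_imp_coprime[of 1 a] by simp
  next
    fix a b assume "a \<in> H" "b \<in> H"
    then show "a * b \<in> H" unfolding H_def using cong_mult[of a 1 "int M" b 1] by simp
  next
    fix a b assume "a \<in> H" "[b = a] (mod int M)"
    then show "b \<in> H" unfolding H_def using cong_trans by blast
  qed (use M in \<open>simp_all add: H_def\<close>)
  define m where "m = (LEAST m. m > 0 \<and> x ^ m \<in> H)"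
  have mp: "m > 0" "x ^ m \<in> H" using partial_char_least_pow_mem[OF pc xc m_def] by auto
  moreover have "m \<noteq> 1" using mp(2) xn unfolding H_def by auto
  ultimately have m2: "m \<ge> 2" by simp
  define w where "w = cis (2 * pi / real m)"
  have "w ^ m = 1" unfolding w_def using mp(1) by (simp add: Complex.DeMoivre)
  moreover have "w \<noteq> 1"
  proof
    assume "w = 1"
    then have eq: "cis (2 * pi * real (1::nat) / real m) = cis (2 * pi * real (0::nat) / real m)"
      unfolding w_def by simp
    have "inj_on (\<lambda>k. cis (2 * pi * real k / real m)) {..<m}"
      using Complex.bij_betw_roots_unity[OF mp(1)] by (simp add: bij_betw_def)
    from inj_onD[OF this eq] m2 show False by simp
  qed
  moreover obtain H' chi' where "partial_char M H' chi'" "x \<in> H'" "chi' x = w"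
    using partial_char_adjoin[OF pc xc m_def, of w] calculation(1) by blast
  moreover from this(1) obtain psi where "dchar M psi" "\<forall>a\<in>H'. psi a = chi' a"
    using partial_char_extends_to_dchar by blast
  ultimately show ?thesis by auto
qed

section \<open>Orthogonality and expansion\<close>

lemma dchar_principal: "q \<ge> 1 \<Longrightarrow> dchar q (\<lambda>n. if coprime n (int q) then 1 else 0)"
  using dchar_extend_modulus[of 1 "\<lambda>_. 1"] by (simp add: dchar_def)

lemma dchar_mult_mult_cnj:
  assumes "dchar q c" "dchar q t" shows "(\<lambda>y. c y * t y * cnj (t y)) = c"
proof
  fix y
  show "c y * t y * cnj (t y) = c y"
  proof (cases "coprime y (int q)")
    case True
    then show ?thesis using dchar_mult_cnj[OF assms(2) True] by (simp add: mult.assoc)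
  qed (use dchar_eq_0_iff[OF assms(1)] in simp)
qed

lemma sum_dchar_eq_0:
  assumes q: "q \<ge> 1" and xc: "coprime x (int q)" and xn: "\<not> [x = 1] (mod int q)"
  shows "(\<Sum>chi\<in>{chi. dchar q chi}. chi x) = 0"
proof -
  obtain t where t: "dchar q t" "t x \<noteq> 1" using exists_dchar_ne_one[OF q xc xn] by blast
  have t': "dchar q (\<lambda>y. cnj (t y))" using dchar_cnj_fun[OF t(1)] .
  have "(\<Sum>chi\<in>{chi. dchar q chi}. chi x) = (\<Sum>chi\<in>{chi. dchar q chi}. chi x * t x)"
  proof (rule sum.reindex_bij_witness[where i="\<lambda>c y. c y * t y" and j="\<lambda>c y. c y * cnj (t y)"])
    fix c assume "c \<in> {chi. dchar q chi}"
    then have c: "dchar q c" by simp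
    show "(\<lambda>y. c y * cnj (t y)) \<in> {chi. dchar q chi}" "(\<lambda>y. c y * t y) \<in> {chi. dchar q chi}"
      using dchar_mult_fun[OF c] t t' by auto
    show "(\<lambda>y. c y * t y * cnj (t y)) = c" using dchar_mult_mult_cnj[OF c t(1)] .
    show "(\<lambda>y. c y * cnj (t y) * t y) = c" using dchar_mult_mult_cnj[OF c t'] by simp
    then show "c x * cnj (t x) * t x = c x" by (metis (no_types))
  qed
  also have "\<dots> = (\<Sum>chi\<in>{chi. dchar q chi}. chi x) * t x"
    by (simp add: sum_distrib_right)
  finally have "(\<Sum>chi\<in>{chi. dchar q chi}. chi x) * (1 - t x) = 0"
    by (simp add: right_diff_distrib)
  then show ?thesis using t(2) by simp
qed

lemma dchar_orthogonality:
  assumes q: "q \<ge> 1" and a: "0 \<le> a" "a < int q" "coprime a (int q)"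
    and r: "0 \<le> r" "r < int q" "coprime r (int q)"
  shows "(\<Sum>chi\<in>{chi. dchar q chi}. cnj (chi a) * chi r) = (if a = r then of_nat (card {chi. dchar q chi}) else 0)"
proof -
  define ai where "ai = modular_inverse (int q) a"
  have "(\<Sum>chi\<in>{chi. dchar q chi}. cnj (chi a) * chi r) = (\<Sum>chi\<in>{chi. dchar q chi}. chi (ai * r))"
    using dchar_cnj_eq_modular_inverse[OF _ a(3)] dchar_mult unfolding ai_def by (intro sum.cong) auto
  also have "\<dots> = (if a = r then of_nat (card {chi. dchar q chi}) else 0)"
  proof (cases "a = r")
    case True
    then have "[ai * r = 1] (mod int q)" using cong_modular_inverse2[OF a(3)] unfolding ai_def by simp
    then have "chi (ai * r) = 1" if "dchar q chi" for chi using dchar_cong[OF that] dchar_one[OF that] by metis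
    then have "(\<Sum>chi\<in>{chi. dchar q chi}. chi (ai * r)) = (\<Sum>chi\<in>{chi. dchar q chi}. 1)"
      by (intro sum.cong) auto
    then show ?thesis using True by simp
  next
    case False
    have "\<not> [ai * r = 1] (mod int q)"
    proof
      assume "[ai * r = 1] (mod int q)"
      then have "[a * (ai * r) = a] (mod int q)" using cong_scalar_left[of _ 1 _ a] by fastforce
      moreover have "[a * (ai * r) = r] (mod int q)"
        using cong_scalar_right[OF cong_modular_inverse1[OF a(3)], of r] unfolding ai_def by (simp add: mult.assoc)
      ultimately have "r = a" using cong_less_imp_eq_int a r by (meson cong_sym cong_trans)
      then show False using False by simp
    qed
    moreover have "coprime (ai * r) (int q)" unfolding ai_def using a(3) r(3) by simp
    ultimately show ?thesis using sum_dchar_eq_0[OF q] False by simp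
  qed
  finally show ?thesis .
qed

lemma exists_dchar_expansion:
  fixes phi :: "int \<Rightarrow> complex" assumes q: "q \<ge> 1"
  shows "\<exists>c. \<forall>r. 0 \<le> r \<and> r < int q \<and> coprime r (int q) \<longrightarrow> phi r = (\<Sum>chi\<in>{chi. dchar q chi}. c chi * chi r)"
proof -
  define X where "X = {chi. dchar q chi}"
  define R where "R = {r \<in> {0..<int q}. coprime r (int q)}"
  have finR: "finite R" unfolding R_def by (rule finite_subset[of _ "{0..<int q}"]) auto
  have "card X > 0" unfolding X_def using finite_dchar dchar_principal[OF q] card_gt_0_iff by blast
  define c where "c chi = (\<Sum>a\<in>R. phi a * cnj (chi a)) / of_nat (card X)" for chi
  have "phi r = (\<Sum>chi\<in>X. c chi * chi r)" if r: "0 \<le> r" "r < int q" "coprime r (int q)" for r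
  proof -
    have "(\<Sum>chi\<in>X. c chi * chi r) = (\<Sum>chi\<in>X. \<Sum>a\<in>R. phi a * (cnj (chi a) * chi r)) / of_nat (card X)"
      unfolding c_def by (simp add: sum_divide_distrib sum_distrib_right mult.assoc)
    also have "\<dots> = (\<Sum>a\<in>R. phi a * (\<Sum>chi\<in>X. cnj (chi a) * chi r)) / of_nat (card X)"
      by (subst sum.swap) (simp add: sum_distrib_left)
    also have "(\<Sum>a\<in>R. phi a * (\<Sum>chi\<in>X. cnj (chi a) * chi r)) = (\<Sum>a\<in>R. if a = r then phi a * of_nat (card X) else 0)"
      using dchar_orthogonality[OF q _ _ _ r] unfolding R_def X_def by (intro sum.cong) auto
    also have "\<dots> = phi r * of_nat (card X)" using finR r unfolding R_def by simp
    finally show ?thesis using \<open>card X > 0\<close> by simp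
  qed
  then show ?thesis unfolding X_def by blast
qed

text \<open>For a character chi modulo N, defined_mod N chi d says that chi factors through the
  unit group of \<int>/d\<int>, i.e. it is induced by a character modulo d.\<close>
definition defined_mod :: "nat \<Rightarrow> (int \<Rightarrow> complex) \<Rightarrow> nat \<Rightarrow> bool" where
  "defined_mod N chi d \<longleftrightarrow> (\<forall>n. coprime n (int N) \<and> [n = 1] (mod int d) \<longrightarrow> chi n = 1)"

lemma defined_mod_cong:
  assumes chi: "dchar N chi" and dN: "d dvd N" and def: "defined_mod N chi d"
    and n: "coprime n (int N)" "coprime n' (int N)" "[n = n'] (mod int d)"
  shows "chi n = chi n'"
proof -
  define iv where "iv = modular_inverse (int N) n'"
  have inv: "[n' * iv = 1] (mod int N)" unfolding iv_def using cong_modular_inverse1[OF n(2)] .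
  have "[n * iv = n' * iv] (mod int d)" using cong_scalar_right[OF n(3)] .
  moreover have "[n' * iv = 1] (mod int d)" using cong_dvd_modulus[OF inv] dN by simp
  ultimately have "chi (n * iv) = 1"
    using def n unfolding defined_mod_def iv_def by (meson cong_trans coprime_modular_inverse coprime_mult_left_iff)
  moreover have "chi n = chi (n * iv) * chi n'"
    using dchar_cong[OF chi cong_scalar_left[OF inv, of n]] dchar_mult[OF chi] by (simp add: ac_simps)
  ultimately show ?thesis by simp
qed

lemma exists_dchar_inducing:
  assumes N: "N \<ge> 1" and chi: "dchar N chi" and dN: "d dvd N" and def: "defined_mod N chi d"
  shows "\<exists>chid. dchar d chid \<and> (\<forall>n. coprime n (int N) \<longrightarrow> chid n = chi n)"
proof -
  have dNi: "int d dvd int N" using dN by simp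
  define lift where "lift y = (SOME k. [k = y] (mod int d) \<and> coprime k (int N))" for y
  have lift: "[lift y = y] (mod int d)" "coprime (lift y) (int N)" if "coprime y (int d)" for y
  proof -
    have "\<exists>k. [k = y] (mod int d) \<and> coprime k (int N)" using exists_coprime_cong[of "int N" y] that N by simp
    then show "[lift y = y] (mod int d)" "coprime (lift y) (int N)" unfolding lift_def by (metis (no_types, lifting) someI_ex)+
  qed
  have coprime_d: "coprime y (int d)" if "coprime y (int N)" for y
    using coprime_divisors[OF dvd_refl dNi that] .
  have lift_eq: "chi (lift y) = chi y'" if "coprime y (int d)" "coprime y' (int N)" "[y = y'] (mod int d)" for y y'
    using defined_mod_cong[OF chi dN def lift(2) that(2)] lift(1) that by (meson cong_trans)
  define chid where "chid y = (if coprime y (int d) then chi (lift y) else 0)" for y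
  have "dchar d chid" unfolding dchar_def
  proof (intro conjI allI)
    show "d \<ge> 1" using dN N by (metis dvd_0_left_iff less_one not_less)
  next
    fix m n
    show "chid (m * n) = chid m * chid n"
    proof (cases "coprime m (int d) \<and> coprime n (int d)")
      case True
      then have "chi (lift (m * n)) = chi (lift m * lift n)"
        using lift_eq[of "m * n" "lift m * lift n"] lift[of m] lift[of n]
        by (simp add: cong_mult cong_sym)
      then show ?thesis unfolding chid_def using True dchar_mult[OF chi] by simp
    qed (auto simp: chid_def)
  next
    fix n
    have c: "[n + int d = n] (mod int d)" by (simp add: cong_iff_dvd_diff)
    then have cc: "coprime (n + int d) (int d) \<longleftrightarrow> coprime n (int d)" by (rule coprime_cong_cong_left)
    show "chid (n + int d) = chid n"
    proof (cases "coprime n (int d)")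
      case True
      then show ?thesis unfolding chid_def using cc lift_eq[of "n + int d" "lift n"] lift[of n] c
        by (metis cong_sym cong_trans)
    qed (simp add: chid_def cc)
  next
    fix n
    show "chid n = 0 \<longleftrightarrow> \<not> coprime n (int d)"
      unfolding chid_def using lift dchar_eq_0_iff[OF chi] by auto
  qed
  moreover have "chid n = chi n" if "coprime n (int N)" for n
    unfolding chid_def using lift_eq[OF coprime_d[OF that] that] coprime_d[OF that] by simp
  ultimately show ?thesis by blast
qed

lemma exists_primitive_char_inducing:
  assumes N: "N \<ge> 1" and chi: "dchar N chi" and A: "A dvd N" and def: "defined_mod N chi A"
  shows "\<exists>q chip. q dvd A \<and> primitive_char q chip \<and> (\<forall>n. coprime n (int N) \<longrightarrow> chip n = chi n)"
proof -
  define q where "q = (LEAST d. d dvd A \<and> defined_mod N chi d)"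
  have "A dvd A \<and> defined_mod N chi A" using def by simp
  then have "q dvd A \<and> defined_mod N chi q" unfolding q_def by (rule LeastI)
  then have qA: "q dvd A" and def_q: "defined_mod N chi q" by auto
  have qmin: "q \<le> d" if "d dvd A" "defined_mod N chi d" for d unfolding q_def using that by (simp add: Least_le)
  obtain chip where chip: "dchar q chip" "\<forall>n. coprime n (int N) \<longrightarrow> chip n = chi n"
    using exists_dchar_inducing[OF N chi dvd_trans[OF qA A] def_q] by blast
  have "primitive_char q chip" unfolding primitive_char_def
  proof (intro conjI allI impI notI)
    fix d assume d: "d dvd q \<and> d < q"
      and triv: "\<forall>n. coprime n (int q) \<and> [n = 1] (mod int d) \<longrightarrow> chip n = 1"
    have "coprime n (int q)" if "coprime n (int N)" for n
      using coprime_divisors[OF dvd_refl _ that] qA A by (metis dvd_trans int_dvd_int_iff)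
    then have "defined_mod N chi d" using triv chip(2) unfolding defined_mod_def by metis
    then show False using qmin[of d] d dvd_trans[OF _ qA] by fastforce
  qed (rule chip(1))
  then show ?thesis using qA chip(2) by blast
qed

lemma div_dvd_self: "f dvd (N::nat) \<Longrightarrow> N div f dvd N"
  by (metis dvd_mult_div_cancel dvd_triv_right)

lemma cong_1_lcm:
  fixes c :: int assumes "[c = 1] (mod int A)" "[c = 1] (mod int B)"
  shows "[c = 1] (mod int (lcm A B))"
  using assms by (simp add: cong_iff_dvd_diff lcm_least flip: lcm_int_int_eq)

lemma conductor_dvd_lcm:
  fixes N f Nstar :: nat
  assumes N: "N \<ge> 1" and fN: "f dvd N" and NsN: "Nstar dvd N" and gc: "gcd f (N div f) dvd N div Nstar"
  shows "Nstar dvd lcm f (N div f)"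
proof -
  obtain k where k: "N div Nstar = gcd f (N div f) * k" using gc by blast
  have "gcd f (N div f) * lcm f (N div f) = N" using prod_gcd_lcm_nat[of f "N div f"] dvd_mult_div_cancel[OF fN] by simp
  also have "\<dots> = gcd f (N div f) * (Nstar * k)" using NsN k by (metis dvd_mult_div_cancel mult.left_commute)
  finally have "gcd f (N div f) * lcm f (N div f) = gcd f (N div f) * (Nstar * k)" .
  moreover have "gcd f (N div f) \<noteq> 0" using fN N by auto
  ultimately have "lcm f (N div f) = Nstar * k" using mult_left_cancel by blast
  then show ?thesis by simp
qed

lemma induced_by_defined_mod:
  assumes "induced_by N psi Nstar psis" "Nstar dvd L"
  shows "defined_mod N psi L"
  unfolding defined_mod_def
proof (intro allI impI)
  fix c assume c: "coprime c (int N) \<and> [c = 1] (mod int L)"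
  have ps: "dchar Nstar psis" using assms(1) by (simp add: induced_by_def primitive_char_def)
  have "[c = 1] (mod int Nstar)" using c assms(2) cong_dvd_modulus by (metis int_dvd_int_iff)
  then show "psi c = 1" using assms(1) c dchar_cong[OF ps] dchar_one[OF ps] by (simp add: induced_by_def)
qed

lemma defined_mod_lcm_cong:
  assumes psi: "dchar N psi" and AN: "A dvd N" and BN: "B dvd N" and def: "defined_mod N psi (lcm A B)"
    and a: "coprime a (int N)" "[a = 1] (mod int A)" and b: "coprime b (int N)" "[b = 1] (mod int B)"
    and a': "coprime a' (int N)" "[a' = 1] (mod int A)" and b': "coprime b' (int N)" "[b' = 1] (mod int B)"
    and e: "[a * b = a' * b'] (mod int N)"
  shows "psi b = psi b'"
proof -
  define bi where "bi = modular_inverse (int N) b"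
  define c where "c = b' * bi"
  have bb: "[b * bi = 1] (mod int N)" unfolding bi_def using cong_modular_inverse1[OF b(1)] .
  have "[b * c = b'] (mod int N)"
    using cong_scalar_left[OF bb, of b'] unfolding c_def by (simp add: ac_simps)
  then have pb: "psi b' = psi b * psi c" using dchar_cong[OF psi] dchar_mult[OF psi] by metis
  have "[1 * b = 1 * b'] (mod int A)"
    using cong_dvd_modulus[OF e] AN cong_scalar_right[OF a(2), of b] cong_scalar_right[OF a'(2), of b']
    by (metis cong_sym cong_trans int_dvd_int_iff)
  then have bA: "[b = b'] (mod int A)" by simp
  have "[c = b * bi] (mod int A)" unfolding c_def by (rule cong_sym[OF cong_scalar_right[OF bA]])
  also have "[b * bi = 1] (mod int A)" using cong_dvd_modulus[OF bb] AN by simp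
  finally have cA: "[c = 1] (mod int A)" .
  have "[bi = bi * b] (mod int B)" using cong_sym[OF cong_scalar_left[OF b(2), of bi]] by simp
  also have "[bi * b = 1] (mod int B)" using cong_dvd_modulus[OF bb] BN by (simp add: mult.commute)
  finally have "[bi = 1] (mod int B)" .
  then have cB: "[c = 1] (mod int B)" unfolding c_def using cong_mult[OF b'(2)] by fastforce
  have "coprime c (int N)" unfolding c_def bi_def using b(1) b'(1) by simp
  then have "psi c = 1" using def cong_1_lcm[OF cA cB] unfolding defined_mod_def by blast
  then show ?thesis using pb by simp
qed

lemma exists_twisting_char:
  assumes N: "N \<ge> 1" and psi: "dchar N psi" and cond: "induced_by N psi Nstar psis"
    and fN: "f dvd N" and gc: "gcd f (N div f) dvd N div Nstar"
  shows "\<exists>chi. dchar N chi \<and> defined_mod N chi (N div f) \<and> defined_mod N (\<lambda>n. chi n * cnj (psi n)) f"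
proof -
  define A where "A = N div f"
  have AN: "A dvd N" unfolding A_def using div_dvd_self[OF fN] .
  have "Nstar dvd lcm A f"
    using conductor_dvd_lcm[OF N fN _ gc] cond unfolding A_def induced_by_def by (simp add: lcm.commute)
  then have def: "defined_mod N psi (lcm A f)" using induced_by_defined_mod[OF cond] by blast
  define Rep where "Rep y p \<longleftrightarrow> coprime (fst p) (int N) \<and> coprime (snd p) (int N) \<and> [fst p = 1] (mod int A)
      \<and> [snd p = 1] (mod int f) \<and> [y = fst p * snd p] (mod int N)" for y p
  define H where "H = {y. \<exists>p. Rep y p}"
  define chiH where "chiH y = psi (snd (SOME p. Rep y p))" for y
  have chiH_eq: "chiH y = psi (snd p)" if "Rep y p" for y p
  proof -
    have "Rep y (SOME p. Rep y p)" using that by (rule someI)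
    then show ?thesis unfolding chiH_def using that defined_mod_lcm_cong[OF psi AN fN def]
      unfolding Rep_def by (meson cong_sym cong_trans)
  qed
  have Rep_mult: "Rep (x * y) (fst p * fst p', snd p * snd p')" if "Rep x p" "Rep y p'" for x y p p'
    using that unfolding Rep_def by (auto dest: cong_mult[where b=1 and d=1, simplified] cong_mult simp: ac_simps)
  have "partial_char N H chiH" unfolding partial_char_def
  proof (intro conjI ballI allI impI)
    show "N \<ge> 1" by (rule N)
    have "Rep 1 (1, 1)" unfolding Rep_def by simp
    then show "1 \<in> H" unfolding H_def by blast
  next
    fix y assume "y \<in> H"
    then obtain p where p: "Rep y p" unfolding H_def by blast
    then have "coprime (fst p * snd p) (int N)" unfolding Rep_def by simp
    then show "coprime y (int N)" using p unfolding Rep_def by (meson cong_imp_coprime cong_sym)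
    show "chiH y \<noteq> 0" using chiH_eq[OF p] p dchar_eq_0_iff[OF psi] unfolding Rep_def by simp
  next
    fix x y assume "x \<in> H" "y \<in> H"
    then obtain p p' where p: "Rep x p" and p': "Rep y p'" unfolding H_def by blast
    show "x * y \<in> H" unfolding H_def using Rep_mult[OF p p'] by blast
    show "chiH (x * y) = chiH x * chiH y"
      using chiH_eq[OF Rep_mult[OF p p']] chiH_eq[OF p] chiH_eq[OF p'] dchar_mult[OF psi] by simp
    assume "[x = y] (mod int N)"
    then have "Rep y p" using p unfolding Rep_def by (meson cong_sym cong_trans)
    then show "chiH x = chiH y" using chiH_eq p by simp
  next
    fix x y assume "x \<in> H" and yx: "[y = x] (mod int N)"
    then obtain p where "Rep x p" unfolding H_def by blast
    then have "Rep y p" using yx unfolding Rep_def by (meson cong_trans)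
    then show "y \<in> H" unfolding H_def by blast
  qed
  then obtain chi where chi: "dchar N chi" "\<forall>a\<in>H. chi a = chiH a"
    using partial_char_extends_to_dchar by blast
  have "chi n = 1" if n: "coprime n (int N)" "[n = 1] (mod int A)" for n
  proof -
    have r: "Rep n (n, 1)" unfolding Rep_def using n by simp
    then have "n \<in> H" unfolding H_def by blast
    then show ?thesis using chi(2) chiH_eq[OF r] dchar_one[OF psi] by simp
  qed
  moreover have "chi n * cnj (psi n) = 1" if n: "coprime n (int N)" "[n = 1] (mod int f)" for n
  proof -
    have r: "Rep n (1, n)" unfolding Rep_def using n by simp
    then have "n \<in> H" unfolding H_def by blast
    then show ?thesis using chi(2) chiH_eq[OF r] dchar_mult_cnj[OF psi n(1)] by simp
  qed
  ultimately show ?thesis using chi(1) unfolding A_def defined_mod_def by blast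
qed

lemma induced_by_if_eq_on_units:
  assumes G: "dchar L G" and chis: "primitive_char c chis" and N: "N \<noteq> 0"
    and eq: "\<forall>n. coprime n (int N) \<longrightarrow> G n = chis n"
  shows "induced_by L G c chis"
  unfolding induced_by_def
proof (intro conjI allI)
  show cL: "c dvd L" using primitive_char_conductor_dvd[OF chis G N] eq by simp
  fix n
  show "G n = (if coprime n (int L) then chis n else 0)"
  proof (cases "coprime n (int L)")
    case True
    then obtain k where k: "[k = n] (mod int L)" "coprime k (int N)"
      using exists_coprime_cong[of "int N" n "int L"] N by auto
    have "[k = n] (mod int c)" using cong_dvd_modulus[OF k(1)] cL by simp
    then show ?thesis using True dchar_cong[OF G k(1)] eq k(2) dchar_cong[OF primitive_char_dchar[OF chis]] by simp
  qed (simp add: dchar_eq_0_iff[OF G])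
qed (rule chis)

lemma D_index_memD:
  assumes T: "(f, chi1, chi2) \<in> D_index N Nstar psi" and N: "N \<ge> 1"
  obtains q1 q2 where "f dvd N" "gcd f (N div f) dvd N div Nstar" "q1 dvd N div f" "q2 dvd f"
    "primitive_char q1 chi1" "primitive_char q2 chi2" "\<forall>n. coprime n (int N) \<longrightarrow> chi1 n * cnj (chi2 n) = psi n"
proof -
  have fN: "f dvd N" and gc: "gcd f (N div f) dvd N div Nstar" using T unfolding D_index_def by auto
  obtain q1 q2 where q: "q1 dvd N div f" "q2 dvd f" "primitive_char q1 chi1" "primitive_char q2 chi2"
      "char_sim q1 q2 chi1 chi2 N psi" using T unfolding D_index_def by auto
  obtain c chis where cs: "induced_by (lcm q1 q2) (\<lambda>n. chi1 n * cnj (chi2 n)) c chis" "induced_by N psi c chis"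
    using q(5) unfolding char_sim_def by blast
  have "q1 dvd N" "q2 dvd N" using q(1,2) fN by (auto intro: dvd_trans div_dvd_self)
  then have "int (lcm q1 q2) dvd int N" by simp
  then have "chi1 n * cnj (chi2 n) = psi n" if "coprime n (int N)" for n
    using cs that coprime_divisors[OF dvd_refl _ that] unfolding induced_by_def by metis
  then show ?thesis using that fN gc q(1-4) by blast
qed

lemma finite_D_index: assumes N: "N \<ge> 1" shows "finite (D_index N Nstar psi)"
proof -
  define U where "U = (\<Union>q\<in>{q. q dvd N}. {chi. dchar q chi})"
  have "finite U" unfolding U_def using N by (intro finite_UN_I) (simp_all add: finite_dchar)
  moreover have "D_index N Nstar psi \<subseteq> {f. f dvd N} \<times> (U \<times> U)"
  proof
    fix T assume "T \<in> D_index N Nstar psi"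
    moreover obtain f chi1 chi2 where T_eq: "T = (f, chi1, chi2)" by (cases T)
    ultimately obtain q1 q2 where q: "f dvd N" "q1 dvd N div f" "q2 dvd f" "primitive_char q1 chi1" "primitive_char q2 chi2"
      using D_index_memD[OF _ N] by metis
    then have "q1 dvd N" "q2 dvd N" by (auto intro: dvd_trans div_dvd_self)
    then show "T \<in> {f. f dvd N} \<times> (U \<times> U)" unfolding U_def T_eq using q by (auto simp: primitive_char_def)
  qed
  ultimately show ?thesis using N by (simp add: finite_subset)
qed

lemma D_index_memI:
  assumes N: "N \<ge> 1" and psi: "dchar N psi" and cond: "induced_by N psi Nstar psis"
    and fN: "f dvd N" and gc: "gcd f (N div f) dvd N div Nstar" and chi: "dchar N chi"
    and def1: "defined_mod N chi (N div f)" and def2: "defined_mod N (\<lambda>n. chi n * cnj (psi n)) f"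
  shows "\<exists>chi1 chi2. (f, chi1, chi2) \<in> D_index N Nstar psi \<and> (\<forall>n. coprime n (int N) \<longrightarrow> chi1 n = chi n)"
proof -
  obtain q1 chi1 where 1: "q1 dvd N div f" "primitive_char q1 chi1" "\<forall>n. coprime n (int N) \<longrightarrow> chi1 n = chi n"
    using exists_primitive_char_inducing[OF N chi _ def1] fN by (metis div_dvd_self)
  obtain q2 chi2 where 2: "q2 dvd f" "primitive_char q2 chi2"
      "\<forall>n. coprime n (int N) \<longrightarrow> chi2 n = chi n * cnj (psi n)"
    using exists_primitive_char_inducing[OF N dchar_mult_fun[OF chi dchar_cnj_fun[OF psi]] fN def2] by blast
  have "chi1 n * cnj (chi2 n) = psis n" if n: "coprime n (int N)" for n
  proof -
    have "chi1 n * cnj (chi2 n) = (chi n * cnj (chi n)) * psi n" using 1(3) 2(3) n by simp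
    also have "\<dots> = psis n" using dchar_mult_cnj[OF chi n] cond n by (simp add: induced_by_def)
    finally show ?thesis .
  qed
  moreover have "dchar (lcm q1 q2) (\<lambda>n. chi1 n * cnj (chi2 n))"
    using dchar_lcm_mult_cnj 1(2) 2(2) unfolding primitive_char_def by blast
  moreover have "primitive_char Nstar psis" using cond by (simp add: induced_by_def)
  ultimately have "induced_by (lcm q1 q2) (\<lambda>n. chi1 n * cnj (chi2 n)) Nstar psis"
    using induced_by_if_eq_on_units[of _ _ Nstar psis N] N by simp
  then have "char_sim q1 q2 chi1 chi2 N psi" unfolding char_sim_def using cond by blast
  then show ?thesis unfolding D_index_def using fN gc 1 2 by blast
qed

section \<open>Orthogonality of the D-series\<close>

lemma sum_units_char_eq_0:
  fixes h :: "int \<Rightarrow> complex" and u :: "nat \<Rightarrow> int"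
  assumes g: "g \<ge> 1" "g dvd N"
    and h_mult: "\<And>a b. h (a * b) = h a * h b"
    and h_cong: "\<And>n n'. coprime n (int N) \<Longrightarrow> coprime n' (int N) \<Longrightarrow> [n = n'] (mod int g) \<Longrightarrow> h n = h n'"
    and m: "coprime m (int N)" "h m \<noteq> 1"
    and u: "\<And>r. r < g \<Longrightarrow> coprime r g \<Longrightarrow> [u r = int r] (mod int g) \<and> coprime (u r) (int N)"
  shows "(\<Sum>r\<in>{r. r < g \<and> coprime r g}. h (- u r)) = 0"
proof -
  define R where "R = {r. r < g \<and> coprime r g}"
  have finR: "finite R" unfolding R_def by simp
  have mg: "coprime m (int g)" using coprime_divisors[OF dvd_refl _ m(1)] g(2) by simp
  \<comment> \<open>multiplication by m permutes R\<close>
  define sig where "sig r = nat ((m * int r) mod int g)" for r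
  have sig_cong: "[int (sig r) = m * int r] (mod int g)" for r
    unfolding sig_def using g(1) by (simp add: cong_def)
  have sigR: "sig r \<in> R" if "r \<in> R" for r
  proof -
    have "sig r < g" unfolding sig_def using g(1) by (simp add: nat_less_iff)
    moreover have "coprime (m * int r) (int g)" using that mg unfolding R_def by simp
    then have "coprime (sig r) g" using sig_cong cong_imp_coprime cong_sym by (metis coprime_int_iff)
    ultimately show ?thesis unfolding R_def by simp
  qed
  have inj: "inj_on sig R"
  proof (rule inj_onI)
    fix r r' assume "r \<in> R" "r' \<in> R" "sig r = sig r'"
    then have "[m * int r = m * int r'] (mod int g)" using sig_cong by (metis cong_sym cong_trans)
    then have "[int r = int r'] (mod int g)" using cong_mult_lcancel[OF mg] by blast
    then show "r = r'" using \<open>r \<in> R\<close> \<open>r' \<in> R\<close> cong_less_imp_eq_int[of "int r" "int g" "int r'"] unfolding R_def by simp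
  qed
  have "sig ` R = R" using card_subset_eq[OF finR] sigR card_image[OF inj] by blast
  have shift: "h (- u (sig r)) = h m * h (- u r)" if r: "r \<in> R" for r
  proof -
    have ur: "[u r = int r] (mod int g)" "coprime (u r) (int N)" using u r unfolding R_def by auto
    have us: "[u (sig r) = int (sig r)] (mod int g)" "coprime (u (sig r)) (int N)"
      using u sigR[OF r] unfolding R_def by auto
    have "[u (sig r) = m * u r] (mod int g)"
      using cong_trans[OF us(1) sig_cong] cong_scalar_left[OF ur(1), of m] by (meson cong_sym cong_trans)
    then have "[- u (sig r) = m * (- u r)] (mod int g)" by (simp add: cong_minus_minus_iff)
    then have "h (- u (sig r)) = h (m * (- u r))" using h_cong us(2) ur(2) m(1) by simp
    then show ?thesis using h_mult[of m "- u r"] by simp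
  qed
  define S where "S = (\<Sum>r\<in>R. h (- u r))"
  have "S = (\<Sum>r\<in>sig ` R. h (- u r))" unfolding S_def \<open>sig ` R = R\<close> ..
  also have "\<dots> = (\<Sum>r\<in>R. h (- u (sig r)))" using sum.reindex[OF inj] by simp
  also have "\<dots> = h m * S" unfolding S_def using shift by (simp add: sum_distrib_left)
  finally have "S * (1 - h m) = 0" by (simp add: algebra_simps)
  then show ?thesis using m(2) unfolding S_def R_def by simp
qed

lemma sing_cusps_fiber:
  assumes "f dvd N" "gcd f (N div f) dvd N div Nstar"
  shows "{r. (f, r) \<in> sing_cusps N Nstar} = {r. r < gcd f (N div f) \<and> coprime r (gcd f (N div f))}"
  using assms unfolding sing_cusps_def by simp

lemma mult_cnj_swap:
  fixes u v u' v' :: complex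
  assumes "v * cnj v = 1" "u' * cnj u' = 1" "u * cnj v = u' * cnj v'"
  shows "u * cnj u' = v * cnj v'"
proof -
  have "u * cnj u' = (u * cnj v) * (v * cnj u')" using assms(1) by (simp add: ac_simps)
  also have "\<dots> = (u' * cnj u') * (v * cnj v')" using assms(3) by (simp add: ac_simps)
  finally show ?thesis using assms(2) by simp
qed

lemma coprime_int_dvd_right: "coprime n (int N) \<Longrightarrow> d dvd N \<Longrightarrow> coprime n (int d)"
  using coprime_divisors[OF dvd_refl, of "int d" "int N" n] by simp

lemma dchar_cong_dvd:
  assumes "dchar q chi" "q dvd M" "[m = n] (mod int M)" shows "chi m = chi n"
  using dchar_cong[OF assms(1) cong_dvd_modulus[OF assms(3)]] assms(2) by simp

lemma D_index_ratio_cong: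
  assumes N: "N \<ge> 1" and T: "(f, chi1, chi2) \<in> D_index N Nstar psi" and T': "(f, chi1', chi2') \<in> D_index N Nstar psi"
    and n: "coprime n (int N)" "coprime n' (int N)" "[n = n'] (mod int (gcd f (N div f)))"
  shows "chi1 n * cnj (chi1' n) = chi1 n' * cnj (chi1' n')"
proof -
  obtain q1 q2 where fN: "f dvd N" and "gcd f (N div f) dvd N div Nstar" and q1: "q1 dvd N div f" and q2: "q2 dvd f"
    and p1: "primitive_char q1 chi1" and p2: "primitive_char q2 chi2"
    and rel: "\<forall>n. coprime n (int N) \<longrightarrow> chi1 n * cnj (chi2 n) = psi n"
    by (rule D_index_memD[OF T N])
  obtain q1' q2' where "f dvd N" and "gcd f (N div f) dvd N div Nstar" and q1': "q1' dvd N div f" and q2': "q2' dvd f"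
    and p1': "primitive_char q1' chi1'" and p2': "primitive_char q2' chi2'"
    and rel': "\<forall>n. coprime n (int N) \<longrightarrow> chi1' n * cnj (chi2' n) = psi n"
    by (rule D_index_memD[OF T' N])
  note q = q1 q2 p1[THEN primitive_char_dchar] p2[THEN primitive_char_dchar]
  note q' = q1' q2' p1'[THEN primitive_char_dchar] p2'[THEN primitive_char_dchar]
  have AN: "N div f dvd N" using div_dvd_self[OF fN] .
  have ratio: "chi1 m * cnj (chi1' m) = chi2 m * cnj (chi2' m)" if m: "coprime m (int N)" for m
  proof (rule mult_cnj_swap)
    show "chi2 m * cnj (chi2 m) = 1"
      using dchar_mult_cnj[OF q(4) coprime_int_dvd_right[OF m dvd_trans[OF q2 fN]]] .
    show "chi1' m * cnj (chi1' m) = 1"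
      using dchar_mult_cnj[OF q'(3) coprime_int_dvd_right[OF m dvd_trans[OF q1' AN]]] .
    show "chi1 m * cnj (chi2 m) = chi1' m * cnj (chi2' m)" using rel rel' m by simp
  qed
  have "int (gcd f (N div f)) = gcd (int (N div f)) (int f)" by (simp add: gcd.commute)
  then obtain k where k: "[k = n] (mod int (N div f))" "[k = n'] (mod int f)"
    using cong_solvable_mod_gcd n(3) by metis
  have "coprime k (int (N div f))"
    using cong_imp_coprime[OF cong_sym[OF k(1)] coprime_int_dvd_right[OF n(1) AN]] .
  moreover have "coprime k (int f)"
    using cong_imp_coprime[OF cong_sym[OF k(2)] coprime_int_dvd_right[OF n(2) fN]] .
  ultimately have "coprime k (int f * int (N div f))" by simp
  then have kN: "coprime k (int N)" using dvd_mult_div_cancel[OF fN] by (metis of_nat_mult)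
  have "chi1 n * cnj (chi1' n) = chi1 k * cnj (chi1' k)"
    using dchar_cong_dvd[OF q(3) q(1) k(1)] dchar_cong_dvd[OF q'(3) q'(1) k(1)] by simp
  also have "\<dots> = chi2 k * cnj (chi2' k)" using ratio[OF kN] .
  also have "\<dots> = chi2 n' * cnj (chi2' n')"
    using dchar_cong_dvd[OF q(4) q(2) k(2)] dchar_cong_dvd[OF q'(4) q'(2) k(2)] by simp
  also have "\<dots> = chi1 n' * cnj (chi1' n')" using ratio[OF n(2)] by simp
  finally show ?thesis .
qed

lemma D_index_snd_unique:
  assumes N: "N \<ge> 1" and T: "(f, chi1, chi2) \<in> D_index N Nstar psi" and T': "(f', chi1, chi2') \<in> D_index N Nstar psi"
  shows "chi2 = chi2'"
proof -
  obtain q1 q2 where fN: "f dvd N" and "gcd f (N div f) dvd N div Nstar" and q1: "q1 dvd N div f" and "q2 dvd f"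
    and p1: "primitive_char q1 chi1" and p2: "primitive_char q2 chi2"
    and rel: "\<forall>n. coprime n (int N) \<longrightarrow> chi1 n * cnj (chi2 n) = psi n"
    by (rule D_index_memD[OF T N])
  obtain q1' q2' where "f' dvd N" and "gcd f' (N div f') dvd N div Nstar" and "q1' dvd N div f'" and "q2' dvd f'"
    and "primitive_char q1' chi1" and p2': "primitive_char q2' chi2'"
    and rel': "\<forall>n. coprime n (int N) \<longrightarrow> chi1 n * cnj (chi2' n) = psi n"
    by (rule D_index_memD[OF T' N])
  have "chi2 n = chi2' n" if n: "coprime n (int N)" for n
  proof -
    have "chi1 n \<noteq> 0"
      using dchar_eq_0_iff[OF primitive_char_dchar[OF p1]] coprime_int_dvd_right[OF n] q1 fN div_dvd_self dvd_trans
      by metis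
    moreover have "chi1 n * cnj (chi2 n) = chi1 n * cnj (chi2' n)" using rel rel' n by simp
    ultimately have "cnj (chi2 n) = cnj (chi2' n)" by simp
    then show ?thesis by simp
  qed
  then show ?thesis using primitive_char_unique[OF p2 p2', of N] N by simp
qed

lemma D_index_coeffs_orthogonal:
  assumes N: "N \<ge> 1"
    and reps: "\<forall>(f, r)\<in>sing_cusps N Nstar. [rep f r = int r] (mod int (gcd f (N div f))) \<and> coprime (rep f r) (int N)"
    and T: "(f, chi1, chi2) \<in> D_index N Nstar psi" and T': "(f, chi1', chi2') \<in> D_index N Nstar psi"
    and ne: "(chi1, chi2) \<noteq> (chi1', chi2')"
  shows "(\<Sum>r\<in>{r. (f, r) \<in> sing_cusps N Nstar}. chi1 (- rep f r) * cnj (chi1' (- rep f r))) = 0"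
proof -
  define g where "g = gcd f (N div f)"
  obtain q1 q2 where fN: "f dvd N" and gc: "gcd f (N div f) dvd N div Nstar" and "q1 dvd N div f" and "q2 dvd f"
    and p1: "primitive_char q1 chi1" and "primitive_char q2 chi2"
    and "\<forall>n. coprime n (int N) \<longrightarrow> chi1 n * cnj (chi2 n) = psi n"
    by (rule D_index_memD[OF T N])
  obtain q1' q2' where "f dvd N" and "gcd f (N div f) dvd N div Nstar" and q1': "q1' dvd N div f" and "q2' dvd f"
    and p1': "primitive_char q1' chi1'" and "primitive_char q2' chi2'"
    and "\<forall>n. coprime n (int N) \<longrightarrow> chi1' n * cnj (chi2' n) = psi n"
    by (rule D_index_memD[OF T' N])
  have "chi1 \<noteq> chi1'"
  proof
    assume "chi1 = chi1'"
    then have "chi2 = chi2'" using D_index_snd_unique[OF N T] T' by simp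
    then show False using ne \<open>chi1 = chi1'\<close> by simp
  qed
  moreover have "chi1 = chi1'" if "\<forall>n. coprime n (int N) \<longrightarrow> chi1 n = chi1' n"
    using primitive_char_unique[OF p1 p1', of N] N that by simp
  ultimately obtain m0 where m0: "coprime m0 (int N)" "chi1 m0 \<noteq> chi1' m0" by blast
  have unit: "cnj (chi1' m0) * chi1' m0 = 1"
    using dchar_mult_cnj[OF primitive_char_dchar[OF p1'] coprime_int_dvd_right[OF m0(1)]]
      dvd_trans[OF q1' div_dvd_self[OF fN]] by (simp add: mult.commute)
  have "(\<Sum>r\<in>{r. r < g \<and> coprime r g}. chi1 (- rep f r) * cnj (chi1' (- rep f r))) = 0"
  proof (rule sum_units_char_eq_0[where h="\<lambda>n. chi1 n * cnj (chi1' n)" and m=m0])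
    show "g \<ge> 1" "g dvd N" unfolding g_def using fN N by (auto intro: dvd_trans simp: Suc_le_eq)
    show "chi1 (a * b) * cnj (chi1' (a * b)) = chi1 a * cnj (chi1' a) * (chi1 b * cnj (chi1' b))" for a b
      using dchar_mult[OF primitive_char_dchar[OF p1]] dchar_mult[OF primitive_char_dchar[OF p1']] by simp
    show "chi1 n * cnj (chi1' n) = chi1 n' * cnj (chi1' n')"
      if "coprime n (int N)" "coprime n' (int N)" "[n = n'] (mod int g)" for n n'
      using D_index_ratio_cong[OF N T T' that[unfolded g_def]] .
    show "coprime m0 (int N)" using m0(1) .
    show "chi1 m0 * cnj (chi1' m0) \<noteq> 1"
    proof
      assume "chi1 m0 * cnj (chi1' m0) = 1"
      then have "chi1 m0 * (cnj (chi1' m0) * chi1' m0) = chi1' m0" by (simp add: mult.assoc[symmetric])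
      then show False using unit m0(2) by simp
    qed
    show "[rep f r = int r] (mod int g) \<and> coprime (rep f r) (int N)" if "r < g" "coprime r g" for r
      using reps sing_cusps_fiber[OF fN gc] that unfolding g_def by auto
  qed
  then show ?thesis using sing_cusps_fiber[OF fN gc] unfolding g_def by simp
qed

section \<open>Spanning\<close>

lemma D_index_twist:
  assumes N: "N \<ge> 1" and psi: "dchar N psi" and cond: "induced_by N psi Nstar psis"
    and fN: "f dvd N" and gc: "gcd f (N div f) dvd N div Nstar"
    and chiA: "dchar N chiA" "defined_mod N chiA (N div f)" "defined_mod N (\<lambda>n. chiA n * cnj (psi n)) f"
    and th: "dchar (gcd f (N div f)) th"
  shows "\<exists>chi1 chi2. (f, chi1, chi2) \<in> D_index N Nstar psi \<and>
           (\<forall>n. coprime n (int N) \<longrightarrow> chi1 n = chiA n * th n)"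
proof -
  define g where "g = gcd f (N div f)"
  define chi where "chi n = chiA n * (if coprime n (int N) then th n else 0)" for n
  have gN: "g dvd N" unfolding g_def using fN by (auto intro: dvd_trans)
  have th1: "th n = 1" if "[n = 1] (mod int d)" "g dvd d" for n d
    using dchar_cong_dvd[OF th[folded g_def] that(2,1)] dchar_one[OF th] by simp
  have d: "dchar N chi" unfolding chi_def using dchar_mult_fun[OF chiA(1) dchar_extend_modulus[OF th[folded g_def] gN N]] .
  have d1: "defined_mod N chi (N div f)"
    using chiA(2) th1[of _ "N div f"] unfolding defined_mod_def chi_def g_def by simp
  have d2: "defined_mod N (\<lambda>n. chi n * cnj (psi n)) f"
    using chiA(3) th1[of _ f] unfolding defined_mod_def chi_def g_def by (simp add: ac_simps)
  obtain chi1 chi2 where "(f, chi1, chi2) \<in> D_index N Nstar psi" "\<forall>n. coprime n (int N) \<longrightarrow> chi1 n = chi n"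
    using D_index_memI[OF N psi cond fN gc d d1 d2] by blast
  then show ?thesis unfolding chi_def by auto
qed

lemma sum_regroup:
  fixes a :: "'a \<Rightarrow> 'b::semiring_0"
  assumes "finite X" "finite I" "tau ` X \<subseteq> I"
  shows "(\<Sum>x\<in>X. a x * F (tau x)) = (\<Sum>T\<in>I. (\<Sum>x\<in>{x \<in> X. tau x = T}. a x) * F T)"
proof -
  have "(\<Sum>x\<in>X. a x * F (tau x)) = (\<Sum>T\<in>I. \<Sum>x\<in>{x \<in> X. tau x = T}. a x * F (tau x))"
    by (rule sum.group[OF assms, symmetric])
  also have "\<dots> = (\<Sum>T\<in>I. (\<Sum>x\<in>{x \<in> X. tau x = T}. a x) * F T)"
    by (simp add: sum_distrib_right)
  finally show ?thesis .
qed

lemma D_index_span_coeffs: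
  fixes phi :: "nat \<Rightarrow> complex"
  assumes N: "N \<ge> 1" and psi: "dchar N psi" and cond: "induced_by N psi Nstar psis"
    and reps: "\<forall>(f, r)\<in>sing_cusps N Nstar. [rep f r = int r] (mod int (gcd f (N div f))) \<and> coprime (rep f r) (int N)"
    and fN: "f dvd N" and gc: "gcd f (N div f) dvd N div Nstar"
  shows "\<exists>\<beta>. \<forall>r. (f, r) \<in> sing_cusps N Nstar \<longrightarrow>
           phi r = (\<Sum>T\<in>{T \<in> D_index N Nstar psi. fst T = f}. \<beta> T * fst (snd T) (- rep f r))"
proof -
  obtain chiA where chiA: "dchar N chiA" "defined_mod N chiA (N div f)" "defined_mod N (\<lambda>n. chiA n * cnj (psi n)) f"
    using exists_twisting_char[OF N psi cond fN gc] by blast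
  define g where "g = gcd f (N div f)"
  define X where "X = {th. dchar g th}"
  define I where "I = {T \<in> D_index N Nstar psi. fst T = f}"
  have g1: "g \<ge> 1" unfolding g_def using fN N by (auto simp: Suc_le_eq)
  have finI: "finite I" unfolding I_def using finite_D_index[OF N] by simp
  define tw where "tw th = (SOME T. T \<in> I \<and> (\<forall>n. coprime n (int N) \<longrightarrow> fst (snd T) n = chiA n * th n))" for th
  have tw: "tw th \<in> I \<and> (\<forall>n. coprime n (int N) \<longrightarrow> fst (snd (tw th)) n = chiA n * th n)" if th: "th \<in> X" for th
  proof -
    obtain chi1 chi2 where "(f, chi1, chi2) \<in> D_index N Nstar psi" "\<forall>n. coprime n (int N) \<longrightarrow> chi1 n = chiA n * th n"
      using D_index_twist[OF N psi cond fN gc chiA] th unfolding X_def g_def by blast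
    then have "\<exists>T. T \<in> I \<and> (\<forall>n. coprime n (int N) \<longrightarrow> fst (snd T) n = chiA n * th n)"
      unfolding I_def by (intro exI[of _ "(f, chi1, chi2)"]) simp
    then show ?thesis unfolding tw_def by (rule someI_ex)
  qed
  obtain c where c: "\<forall>x. 0 \<le> x \<and> x < int g \<and> coprime x (int g) \<longrightarrow>
      phi (nat x) / chiA (- rep f (nat x)) = (\<Sum>th\<in>X. c th * th x)"
    using exists_dchar_expansion[OF g1, of "\<lambda>x. phi (nat x) / chiA (- rep f (nat x))"] unfolding X_def by auto
  define \<beta> where "\<beta> T = (\<Sum>th\<in>{th \<in> X. tw th = T}. c th * th (-1))" for T
  have "phi r = (\<Sum>T\<in>I. \<beta> T * fst (snd T) (- rep f r))" if r: "(f, r) \<in> sing_cusps N Nstar" for r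
  proof -
    have rg: "r < g" "coprime r g" using r unfolding sing_cusps_def g_def by auto
    have u: "[rep f r = int r] (mod int g)" "coprime (- rep f r) (int N)" using reps r unfolding g_def by auto
    have "chiA (- rep f r) \<noteq> 0" using dchar_eq_0_iff[OF chiA(1)] u(2) by simp
    moreover have "phi r / chiA (- rep f r) = (\<Sum>th\<in>X. c th * th (int r))" using spec[OF c, of "int r"] rg by simp
    ultimately have "phi r = chiA (- rep f r) * (\<Sum>th\<in>X. c th * th (int r))" by (simp add: field_simps)
    also have "\<dots> = (\<Sum>th\<in>X. c th * th (-1) * fst (snd (tw th)) (- rep f r))"
      unfolding sum_distrib_left
    proof (rule sum.cong[OF refl])
      fix th assume th: "th \<in> X"
      then have d: "dchar g th" unfolding X_def by simp
      have "th (-1) * th (-1) = 1" using dchar_mult[OF d, of "-1" "-1"] dchar_one[OF d] by simp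
      moreover have "th (- rep f r) = th (-1) * th (int r)"
        using dchar_mult[OF d, of "-1" "rep f r"] dchar_cong[OF d u(1)] by simp
      ultimately have "th (int r) = th (-1) * th (- rep f r)" by (metis mult.assoc mult_1)
      then show "chiA (- rep f r) * (c th * th (int r)) = c th * th (-1) * fst (snd (tw th)) (- rep f r)"
        using tw[OF th] u(2) by (simp add: ac_simps)
    qed
    also have "\<dots> = (\<Sum>T\<in>I. \<beta> T * fst (snd T) (- rep f r))"
      unfolding \<beta>_def using tw
      by (intro sum_regroup[where a="\<lambda>th. c th * th (-1)" and F="\<lambda>T. fst (snd T) (- rep f r)"])
        (auto simp: X_def finite_dchar finI)
    finally show ?thesis .
  qed
  then show ?thesis unfolding I_def by blast
qed

lemma finite_sing_cusps:
  assumes N: "N \<ge> 1" shows "finite (sing_cusps N Nstar)"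
proof (rule finite_subset)
  show "sing_cusps N Nstar \<subseteq> {..N} \<times> {..N}"
  proof clarify
    fix f r assume "(f, r) \<in> sing_cusps N Nstar"
    then have fN: "f dvd N" and r: "r < gcd f (N div f)" unfolding sing_cusps_def by auto
    then have "f \<le> N" "f \<noteq> 0" using N by (auto intro: dvd_imp_le)
    moreover have "gcd f (N div f) \<le> f" using \<open>f \<noteq> 0\<close> by (simp add: dvd_imp_le)
    ultimately show "f \<in> {..N} \<and> r \<in> {..N}" using r by simp
  qed
qed simp

lemma eis_coeffs_unique:
  assumes indep: "lin_indep_family C E" and F: "\<forall>z\<in>upper_half. F z = (\<Sum>c\<in>C. a c * E c z)" and c: "c \<in> C"
  shows "eis_coeffs C E F c = a c"
proof -
  define b where "b = eis_coeffs C E F"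
  have "\<forall>z\<in>upper_half. F z = (\<Sum>c\<in>C. b c * E c z)"
    unfolding b_def eis_coeffs_def
    by (rule someI[where P="\<lambda>a. \<forall>z\<in>upper_half. F z = (\<Sum>c\<in>C. a c * E c z)", OF F])
  then have "\<forall>z\<in>upper_half. (\<Sum>c\<in>C. (b c - a c) * E c z) = 0"
    using F by (simp add: left_diff_distrib sum_subtractf)
  then show ?thesis using indep c unfolding lin_indep_family_def b_def by force
qed

definition D_coeff :: "(nat \<Rightarrow> nat \<Rightarrow> int) \<Rightarrow> nat \<Rightarrow> (int \<Rightarrow> complex) \<Rightarrow> nat \<times> nat \<Rightarrow> complex" where
  "D_coeff rep f chi1 c = (if fst c = f then chi1 (- rep f (snd c)) else 0)"

lemma sum_fst_eq:
  assumes "finite C"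
  shows "(\<Sum>c\<in>C. if fst c = f then G (snd c) else 0) = (\<Sum>r\<in>{r. (f, r) \<in> C}. G r)"
proof -
  have "(\<Sum>c\<in>C. if fst c = f then G (snd c) else 0) = (\<Sum>c\<in>{c \<in> C. fst c = f}. G (snd c))"
    by (rule sum.inter_filter[OF assms, symmetric])
  also have "{c \<in> C. fst c = f} = Pair f ` {r. (f, r) \<in> C}" by force
  finally show ?thesis by (simp add: sum.reindex inj_on_def)
qed

lemma D_series_eq_sum:
  assumes "N \<ge> 1"
  shows "D_series N Nstar rep E f chi1 z = (\<Sum>c\<in>sing_cusps N Nstar. D_coeff rep f chi1 c * E c z)"
proof -
  have "(\<Sum>c\<in>sing_cusps N Nstar. D_coeff rep f chi1 c * E c z) =
      (\<Sum>c\<in>sing_cusps N Nstar. if fst c = f then chi1 (- rep f (snd c)) * E (f, snd c) z else 0)"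
    unfolding D_coeff_def by (rule sum.cong) auto
  also have "\<dots> = D_series N Nstar rep E f chi1 z"
    unfolding D_series_def
    by (rule sum_fst_eq[OF finite_sing_cusps[OF assms], where G="\<lambda>r. chi1 (- rep f r) * E (f, r) z"])
  finally show ?thesis ..
qed

lemma D_series_in_eis_span: "N \<ge> 1 \<Longrightarrow> D_series N Nstar rep E f chi1 \<in> eis_span (sing_cusps N Nstar) E"
  unfolding eis_span_def using D_series_eq_sum by blast

lemma formal_inner_D_series:
  assumes N: "N \<ge> 1" and indep: "lin_indep_family (sing_cusps N Nstar) E"
  shows "formal_inner (sing_cusps N Nstar) E (D_series N Nstar rep E f chi1) (D_series N Nstar rep E f' chi1') =
    4 * of_real pi * (if f = f' then (\<Sum>r\<in>{r. (f, r) \<in> sing_cusps N Nstar}. chi1 (- rep f r) * cnj (chi1' (- rep f r))) else 0)"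
proof -
  have coeff: "eis_coeffs (sing_cusps N Nstar) E (D_series N Nstar rep E f chi1) c = D_coeff rep f chi1 c"
    if "c \<in> sing_cusps N Nstar" for f chi1 c
    using eis_coeffs_unique[OF indep _ that] D_series_eq_sum[OF N] by blast
  have "formal_inner (sing_cusps N Nstar) E (D_series N Nstar rep E f chi1) (D_series N Nstar rep E f' chi1') =
      4 * of_real pi * (\<Sum>c\<in>sing_cusps N Nstar. D_coeff rep f chi1 c * cnj (D_coeff rep f' chi1' c))"
    unfolding formal_inner_def using coeff by simp
  also have "(\<Sum>c\<in>sing_cusps N Nstar. D_coeff rep f chi1 c * cnj (D_coeff rep f' chi1' c)) =
      (if f = f' then (\<Sum>r\<in>{r. (f, r) \<in> sing_cusps N Nstar}. chi1 (- rep f r) * cnj (chi1' (- rep f r))) else 0)"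
  proof (cases "f = f'")
    case True
    have "(\<Sum>c\<in>sing_cusps N Nstar. D_coeff rep f chi1 c * cnj (D_coeff rep f' chi1' c)) =
        (\<Sum>c\<in>sing_cusps N Nstar. if fst c = f then chi1 (- rep f (snd c)) * cnj (chi1' (- rep f (snd c))) else 0)"
      unfolding D_coeff_def True by (rule sum.cong) auto
    also have "\<dots> = (\<Sum>r\<in>{r. (f, r) \<in> sing_cusps N Nstar}. chi1 (- rep f r) * cnj (chi1' (- rep f r)))"
      by (rule sum_fst_eq[OF finite_sing_cusps[OF N]])
    finally show ?thesis using True by simp
  qed (auto simp: D_coeff_def intro: sum.neutral)
  finally show ?thesis .
qed

lemma D_series_orthogonal:
  assumes N: "N \<ge> 1" and indep: "lin_indep_family (sing_cusps N Nstar) E"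
    and reps: "\<forall>(f, r)\<in>sing_cusps N Nstar. [rep f r = int r] (mod int (gcd f (N div f))) \<and> coprime (rep f r) (int N)"
    and T: "(f, chi1, chi2) \<in> D_index N Nstar psi" and T': "(f', chi1', chi2') \<in> D_index N Nstar psi"
    and ne: "(f, chi1, chi2) \<noteq> (f', chi1', chi2')"
  shows "formal_inner (sing_cusps N Nstar) E (D_series N Nstar rep E f chi1) (D_series N Nstar rep E f' chi1') = 0"
  using formal_inner_D_series[OF N indep] D_index_coeffs_orthogonal[OF N reps T] T' ne by auto

lemma D_series_inner_self_nonzero:
  assumes N: "N \<ge> 1" and indep: "lin_indep_family (sing_cusps N Nstar) E"
    and reps: "\<forall>(f, r)\<in>sing_cusps N Nstar. [rep f r = int r] (mod int (gcd f (N div f))) \<and> coprime (rep f r) (int N)"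
    and T: "(f, chi1, chi2) \<in> D_index N Nstar psi"
  shows "formal_inner (sing_cusps N Nstar) E (D_series N Nstar rep E f chi1) (D_series N Nstar rep E f chi1) \<noteq> 0"
proof -
  obtain q1 q2 where fN: "f dvd N" and gc: "gcd f (N div f) dvd N div Nstar" and q1: "q1 dvd N div f"
    and "q2 dvd f" and p1: "primitive_char q1 chi1" and "primitive_char q2 chi2"
    and "\<forall>n. coprime n (int N) \<longrightarrow> chi1 n * cnj (chi2 n) = psi n"
    by (rule D_index_memD[OF T N])
  define R where "R = {r. (f, r) \<in> sing_cusps N Nstar}"
  define g where "g = gcd f (N div f)"
  have R: "R = {r. r < g \<and> coprime r g}" unfolding R_def g_def using sing_cusps_fiber[OF fN gc] .
  have "(\<Sum>r\<in>R. chi1 (- rep f r) * cnj (chi1 (- rep f r))) = (\<Sum>r\<in>R. 1)"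
  proof (rule sum.cong[OF refl])
    fix r assume "r \<in> R"
    then have "coprime (- rep f r) (int N)" using reps unfolding R_def by auto
    then show "chi1 (- rep f r) * cnj (chi1 (- rep f r)) = 1"
      using dchar_mult_cnj[OF primitive_char_dchar[OF p1]] coprime_int_dvd_right dvd_trans[OF q1 div_dvd_self[OF fN]]
      by blast
  qed
  moreover have "g \<ge> 1" unfolding g_def using fN N by (auto simp: Suc_le_eq)
  then have "(if g = 1 then 0 else 1) \<in> R" unfolding R by auto
  then have "card R \<noteq> 0" unfolding R by (auto simp: card_eq_0_iff)
  ultimately show ?thesis using formal_inner_D_series[OF N indep] unfolding R_def by simp
qed

lemma eis_span_D_series_expansion:
  assumes N: "N \<ge> 1" and psi: "dchar N psi" and cond: "induced_by N psi Nstar psis"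
    and reps: "\<forall>(f, r)\<in>sing_cusps N Nstar. [rep f r = int r] (mod int (gcd f (N div f))) \<and> coprime (rep f r) (int N)"
    and F: "F \<in> eis_span (sing_cusps N Nstar) E"
  shows "\<exists>b. \<forall>z\<in>upper_half. F z = (\<Sum>T\<in>D_index N Nstar psi. b T * D_series N Nstar rep E (fst T) (fst (snd T)) z)"
proof -
  define C where "C = sing_cusps N Nstar"
  define I where "I = D_index N Nstar psi"
  obtain a where a: "\<forall>z\<in>upper_half. F z = (\<Sum>c\<in>C. a c * E c z)" using F unfolding eis_span_def C_def by blast
  have "\<forall>f. \<exists>\<beta>. \<forall>r. (f, r) \<in> C \<longrightarrow> a (f, r) = (\<Sum>T\<in>{T \<in> I. fst T = f}. \<beta> T * fst (snd T) (- rep f r))"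
  proof
    fix f
    show "\<exists>\<beta>. \<forall>r. (f, r) \<in> C \<longrightarrow> a (f, r) = (\<Sum>T\<in>{T \<in> I. fst T = f}. \<beta> T * fst (snd T) (- rep f r))"
    proof (cases "f dvd N \<and> gcd f (N div f) dvd N div Nstar")
      case True
      then show ?thesis using D_index_span_coeffs[OF N psi cond reps, of f "\<lambda>r. a (f, r)"] unfolding C_def I_def by blast
    qed (auto simp: C_def sing_cusps_def)
  qed
  from choice[OF this] obtain B
    where B: "\<forall>f. \<forall>r. (f, r) \<in> C \<longrightarrow> a (f, r) = (\<Sum>T\<in>{T \<in> I. fst T = f}. B f T * fst (snd T) (- rep f r))"
    by blast
  define b where "b T = B (fst T) T" for T
  have coeff: "(\<Sum>T\<in>I. b T * D_coeff rep (fst T) (fst (snd T)) c) = a c" if c: "c \<in> C" for c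
  proof -
    obtain f r where c_eq: "c = (f, r)" by (cases c)
    have "(\<Sum>T\<in>I. b T * D_coeff rep (fst T) (fst (snd T)) c) =
        (\<Sum>T\<in>I. if fst T = f then B f T * fst (snd T) (- rep f r) else 0)"
      unfolding b_def D_coeff_def c_eq by (intro sum.cong) auto
    also have "\<dots> = (\<Sum>T\<in>{T \<in> I. fst T = f}. B f T * fst (snd T) (- rep f r))"
      using finite_D_index[OF N] unfolding I_def by (simp add: sum.inter_filter)
    finally show ?thesis using B c unfolding c_eq by simp
  qed
  have "F z = (\<Sum>T\<in>I. b T * D_series N Nstar rep E (fst T) (fst (snd T)) z)" if "z \<in> upper_half" for z
  proof -
    have "F z = (\<Sum>c\<in>C. (\<Sum>T\<in>I. b T * D_coeff rep (fst T) (fst (snd T)) c) * E c z)"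
      using a that coeff by simp
    also have "\<dots> = (\<Sum>T\<in>I. b T * (\<Sum>c\<in>C. D_coeff rep (fst T) (fst (snd T)) c * E c z))"
      unfolding sum_distrib_right sum_distrib_left mult.assoc by (rule sum.swap)
    finally show ?thesis unfolding D_series_eq_sum[OF N] C_def .
  qed
  then show ?thesis unfolding I_def by blast
qed

theorem theorem8p1:
  fixes N Nstar :: nat and k :: int and psi psis :: "int \<Rightarrow> complex"
    and rep :: "nat \<Rightarrow> nat \<Rightarrow> int"
    and E :: "nat \<times> nat \<Rightarrow> complex \<Rightarrow> complex"
  assumes N: "N \<ge> 1"
    and psi_char: "dchar N psi"
    and parity: "psi (-1) = (if even k then 1 else -1)"
    and conductor: "induced_by N psi Nstar psis"
    and reps: "\<forall>(f, r)\<in>sing_cusps N Nstar.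
                 [rep f r = int r] (mod int (gcd f (N div f))) \<and> coprime (rep f r) (int N)"
    and indep: "lin_indep_family (sing_cusps N Nstar) E"
  shows "finite (D_index N Nstar psi)
    \<and> (\<forall>(f, chi1, chi2)\<in>D_index N Nstar psi.
          D_series N Nstar rep E f chi1 \<in> eis_span (sing_cusps N Nstar) E)
    \<and> (\<forall>(f, chi1, chi2)\<in>D_index N Nstar psi. \<forall>(f', chi1', chi2')\<in>D_index N Nstar psi.
          (f, chi1, chi2) \<noteq> (f', chi1', chi2') \<longrightarrow>
          formal_inner (sing_cusps N Nstar) E
             (D_series N Nstar rep E f chi1) (D_series N Nstar rep E f' chi1') = 0)
    \<and> (\<forall>(f, chi1, chi2)\<in>D_index N Nstar psi.
          formal_inner (sing_cusps N Nstar) E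
             (D_series N Nstar rep E f chi1) (D_series N Nstar rep E f chi1) \<noteq> 0)
    \<and> (\<forall>F\<in>eis_span (sing_cusps N Nstar) E. \<exists>b.
          \<forall>z\<in>upper_half. F z = (\<Sum>(f, chi1, chi2)\<in>D_index N Nstar psi.
                                   b (f, chi1, chi2) * D_series N Nstar rep E f chi1 z))"
proof (intro conjI)
  show "finite (D_index N Nstar psi)" using finite_D_index[OF N] .
  show "\<forall>(f, chi1, chi2)\<in>D_index N Nstar psi. D_series N Nstar rep E f chi1 \<in> eis_span (sing_cusps N Nstar) E"
    using D_series_in_eis_span[OF N] by blast
  show "\<forall>(f, chi1, chi2)\<in>D_index N Nstar psi. \<forall>(f', chi1', chi2')\<in>D_index N Nstar psi.
          (f, chi1, chi2) \<noteq> (f', chi1', chi2') \<longrightarrow>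
          formal_inner (sing_cusps N Nstar) E
             (D_series N Nstar rep E f chi1) (D_series N Nstar rep E f' chi1') = 0"
    using D_series_orthogonal[OF N indep reps] by blast
  show "\<forall>(f, chi1, chi2)\<in>D_index N Nstar psi.
          formal_inner (sing_cusps N Nstar) E
             (D_series N Nstar rep E f chi1) (D_series N Nstar rep E f chi1) \<noteq> 0"
    using D_series_inner_self_nonzero[OF N indep reps] by blast
  show "\<forall>F\<in>eis_span (sing_cusps N Nstar) E. \<exists>b.
          \<forall>z\<in>upper_half. F z = (\<Sum>(f, chi1, chi2)\<in>D_index N Nstar psi.
                                   b (f, chi1, chi2) * D_series N Nstar rep E f chi1 z)"
    using eis_span_D_series_expansion[OF N psi_char conductor reps] by (simp add: split_def)
qed

end
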